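(* For every $\mu\in[\mu_m,\mu_M]$, $$\lim_{x\to\infty}\frac{V^N(x,N,\mu)}{x}=\max\{\hat f(N,\mu),\beta_N(\mu)\}.$$
   Context: Let $(B_t)_{t\ge0}$ be a standard Brownian motion, $\mathbb F^B$ its augmented filtration and $\mathcal T(\mathbb F^B)$ the set of $\mathbb F^B$-stopping times with values in $[0,\infty]$ (terms discounted at $\tau$ are $0$ on $\{\tau=\infty\}$). Fix $\theta>0$, $\alpha\ge0$, $\sigma>0$, $\rho>0$, $\nu\in[0,1]$, $K\in\mathbb R$, $\hat\rho>0$, $0<\mu_m\le\mu_M<\infty$, $\hat\mu\in[\mu_m,\mu_M]$, and assume $\theta-\alpha-\rho-\mu_m<0$. For $x>0$, $X_t=x\exp((\theta-\alpha-\sigma^2/2)t+\sigma B_t)$ solves $dX_t=(\theta-\alpha)X_tdt+\sigma X_tdB_t$, $X_0=x$, and $\mathsf E_x$ is the corresponding expectation. For $\mu\in[\mu_m,\mu_M]$ let $\hat f(N,\mu):=(\hat\rho+\hat\mu)/(\rho+\mu)$, $\beta_N(\mu):=(\alpha+\nu\mu)/(\rho+\mu+\alpha-\theta)$, and $$V^N(x,N,\mu):=\sup_{\tau\in\mathcal T(\mathbb F^B)}\mathsf E_x\Big[\int_0^\tau e^{-(\rho+\mu)t}(\alpha+\nu\mu)X_tdt+e^{-(\rho+\mu)\tau}\hat f(N,\mu)(X_\tau-K)\Big].$$ *)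

theory Defs
  imports "HOL-Probability.Probability"
begin

definition std_BM :: "'a measure \<Rightarrow> (real \<Rightarrow> 'a \<Rightarrow> real) \<Rightarrow> bool" where
  "std_BM M B \<longleftrightarrow> prob_space M
     \<and> (\<forall>t\<ge>0. B t \<in> borel_measurable M)
     \<and> (\<forall>\<omega>\<in>space M. B 0 \<omega> = 0 \<and> continuous_on {0..} (\<lambda>t. B t \<omega>))
     \<and> (\<forall>s t. 0 \<le> s \<and> s < t \<longrightarrow>
           distributed M lborel (\<lambda>\<omega>. B t \<omega> - B s \<omega>) (normal_density 0 (sqrt (t - s))))
     \<and> (\<forall>(n::nat) (u::nat \<Rightarrow> real). 0 \<le> u 0 \<and> (\<forall>i<n. u i < u (Suc i)) \<longrightarrow>
           prob_space.indep_vars M (\<lambda>_. borel) (\<lambda>i \<omega>. B (u (Suc i)) \<omega> - B (u i) \<omega>) {..<n})"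

definition nat_filt_sets :: "'a measure \<Rightarrow> (real \<Rightarrow> 'a \<Rightarrow> real) \<Rightarrow> ennreal \<Rightarrow> 'a set set" where
  "nat_filt_sets M B t = sigma_sets (space M)
     (\<Union>s\<in>{s. 0 \<le> s \<and> ennreal s \<le> t}. {B s -` A \<inter> space M | A. A \<in> sets borel})"

definition aug_filt :: "'a measure \<Rightarrow> (real \<Rightarrow> 'a \<Rightarrow> real) \<Rightarrow> ennreal \<Rightarrow> 'a measure" where
  "aug_filt M B t = sigma (space M) (nat_filt_sets M B t \<union> null_sets (completion M))"

definition GBM :: "real \<Rightarrow> real \<Rightarrow> real \<Rightarrow> real \<Rightarrow> (real \<Rightarrow> 'a \<Rightarrow> real) \<Rightarrow> real \<Rightarrow> 'a \<Rightarrow> real" where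
  "GBM x \<theta> \<alpha> \<sigma> B t \<omega> = x * exp ((\<theta> - \<alpha> - \<sigma>\<^sup>2 / 2) * t + \<sigma> * B t \<omega>)"

definition reward ::
  "'a measure \<Rightarrow> (real \<Rightarrow> 'a \<Rightarrow> real) \<Rightarrow> real \<Rightarrow> real \<Rightarrow> real \<Rightarrow> real \<Rightarrow> real \<Rightarrow> real \<Rightarrow> real
    \<Rightarrow> real \<Rightarrow> real \<Rightarrow> ('a \<Rightarrow> ennreal) \<Rightarrow> real" where
  "reward M B x \<theta> \<alpha> \<sigma> \<rho> \<nu> K fh \<mu> \<tau> =
     (\<integral>\<omega>. (LINT t:{t. 0 \<le> t \<and> ennreal t \<le> \<tau> \<omega>}|lborel.
                 exp (- (\<rho> + \<mu>) * t) * (\<alpha> + \<nu> * \<mu>) * GBM x \<theta> \<alpha> \<sigma> B t \<omega>)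
           + (if \<tau> \<omega> = \<infinity> then 0
              else exp (- (\<rho> + \<mu>) * enn2real (\<tau> \<omega>)) * fh * (GBM x \<theta> \<alpha> \<sigma> B (enn2real (\<tau> \<omega>)) \<omega> - K))
      \<partial>completion M)"

text \<open>Value function V^N(x,N,\<mu>); the regime label N only enters through fh = f^(N,\<mu>).\<close>
definition VN ::
  "'a measure \<Rightarrow> (real \<Rightarrow> 'a \<Rightarrow> real) \<Rightarrow> real \<Rightarrow> real \<Rightarrow> real \<Rightarrow> real \<Rightarrow> real \<Rightarrow> real \<Rightarrow> real
    \<Rightarrow> real \<Rightarrow> real \<Rightarrow> real" where
  "VN M B x \<theta> \<alpha> \<sigma> \<rho> \<nu> K fh \<mu> =
     (SUP \<tau>\<in>{\<tau>. stopping_time (aug_filt M B) \<tau>}. reward M B x \<theta> \<alpha> \<sigma> \<rho> \<nu> K fh \<mu> \<tau>)"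

end

theory Submission
  imports Defs
begin

text \<open>Write \<open>\<gamma> = \<theta> - \<alpha> - \<rho> - \<mu> < 0\<close> and \<open>a = \<alpha> + \<nu> \<mu>\<close>. The discounted price
  \<open>exp (-(\<rho> + \<mu>) t) X t\<close> equals \<open>x Z t\<close>, where \<open>Z t\<close> is \<open>exp (\<gamma> t)\<close> times the exponential
  martingale of \<open>\<sigma> B\<close>. Since the drift of \<open>Z\<close> is \<open>\<gamma> Z\<close>, the process
  \<open>U s = -\<gamma> \<integral>\<^sub>0\<^sup>s Z + Z s\<close> is a martingale started at \<open>1\<close>; optional stopping on a grid and
  Fatou's lemma give \<open>E U \<tau> \<le> 1\<close> for every stopping time \<open>\<tau>\<close>. As \<open>a \<le> c (-\<gamma>)\<close> and
  \<open>f\<^sub>h \<le> c\<close> for \<open>c = max f\<^sub>h \<beta>\<close>, \<open>\<beta> = a / (-\<gamma>)\<close>, every reward is at most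
  \<open>c x + f\<^sub>h |K|\<close>. Conversely, never stopping earns exactly \<open>\<beta> x\<close> and stopping at once earns
  \<open>f\<^sub>h (x - K)\<close>; dividing by \<open>x\<close> and letting \<open>x \<rightarrow> \<infinity>\<close> gives the limit.\<close>

lemma nn_integral_normal_density_exp:
  assumes v: "0 < v"
  shows "(\<integral>\<^sup>+x. ennreal (normal_density 0 v x) * ennreal (exp (c * x)) \<partial>lborel)
           = ennreal (exp (c^2 * v^2 / 2))"
proof -
  have completed_square:
    "normal_density 0 v x * exp (c * x) = exp (c^2 * v^2 / 2) * normal_density (c * v^2) v x" for x
  proof -
    have "- (x - 0)\<^sup>2 / (2 * v\<^sup>2) + c * x = c^2 * v^2 / 2 + (- (x - c * v^2)\<^sup>2 / (2 * v\<^sup>2))"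
      using v by (simp add: field_simps power2_eq_square)
    then show ?thesis
      unfolding normal_density_def by (simp add: exp_add[symmetric] mult_ac)
  qed
  have "(\<integral>\<^sup>+x. ennreal (normal_density 0 v x) * ennreal (exp (c * x)) \<partial>lborel)
      = (\<integral>\<^sup>+x. ennreal (exp (c^2 * v^2 / 2)) * ennreal (normal_density (c * v^2) v x) \<partial>lborel)"
    by (intro nn_integral_cong) (simp add: completed_square[symmetric] ennreal_mult[symmetric])
  also have "\<dots> = ennreal (exp (c^2 * v^2 / 2)) * (\<integral>\<^sup>+x. ennreal (normal_density (c * v^2) v x) \<partial>lborel)"
    by (rule nn_integral_cmult) simp
  also have "(\<integral>\<^sup>+x. ennreal (normal_density (c * v^2) v x) \<partial>lborel) = 1"
    using v by (subst nn_integral_eq_integral) (auto simp: integral_normal_density)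
  finally show ?thesis by simp
qed

lemma nn_integral_exp_Ioc:
  fixes \<gamma> :: real
  assumes "\<gamma> \<noteq> 0" and "a \<le> b"
  shows "(\<integral>\<^sup>+t. indicator {a<..b} t * ennreal (exp (\<gamma> * (t - a))) \<partial>lborel)
       = ennreal ((1 - exp (\<gamma> * (b - a))) / (- \<gamma>))"
proof -
  have "(\<integral>\<^sup>+t. indicator {a<..b} t * ennreal (exp (\<gamma> * (t - a))) \<partial>lborel)
      = (\<integral>\<^sup>+t. ennreal (indicator {a..b} t * exp (\<gamma> * (t - a))) \<partial>lborel)"
    using AE_lborel_singleton[of a] by (intro nn_integral_cong_AE) (auto simp: indicator_def)
  also have "\<dots> = ennreal ((1 - exp (\<gamma> * (b - a))) / (- \<gamma>))"
  proof (rule nn_integral_has_integral_lebesgue)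
    have "((\<lambda>t. exp (\<gamma> * (t - a))) has_integral
            exp (\<gamma> * (b - a)) / \<gamma> - exp (\<gamma> * (a - a)) / \<gamma>) {a..b}"
    proof (rule fundamental_theorem_of_calculus[OF \<open>a \<le> b\<close>])
      fix x assume "x \<in> {a..b}"
      have "((\<lambda>t. exp (\<gamma> * (t - a)) / \<gamma>) has_real_derivative (exp (\<gamma> * (x - a)) * (\<gamma> * 1) / \<gamma>))
              (at x within {a..b})"
        using assms(1) by (intro derivative_eq_intros) auto
      then show "((\<lambda>t. exp (\<gamma> * (t - a)) / \<gamma>) has_vector_derivative exp (\<gamma> * (x - a))) (at x within {a..b})"
        using assms(1) by (simp add: has_real_derivative_iff_has_vector_derivative)
    qed
    then show "((\<lambda>t. exp (\<gamma> * (t - a))) has_integral ((1 - exp (\<gamma> * (b - a))) / (- \<gamma>))) {a..b}"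
      by (simp add: diff_divide_distrib)
  qed simp
  finally show ?thesis .
qed

lemma nn_integral_exp_atLeast_0:
  fixes \<gamma> :: real
  assumes "\<gamma> < 0"
  shows "(\<integral>\<^sup>+t. indicator {0..} t * ennreal (exp (\<gamma> * t)) \<partial>lborel) = ennreal (1 / (- \<gamma>))"
proof -
  define l where "l = - \<gamma>"
  have l: "0 < l" using assms by (simp add: l_def)
  interpret E: prob_space "density lborel (exponential_density l)"
    by (rule prob_space_exponential_density[OF l])
  have "1 = emeasure (density lborel (\<lambda>t. ennreal (exponential_density l t))) (space lborel)"
    using E.emeasure_space_1 by simp
  also have "\<dots> = (\<integral>\<^sup>+t. ennreal (exponential_density l t) * indicator (space lborel) t \<partial>lborel)"
    by (rule emeasure_density) simp_all
  also have "\<dots> = (\<integral>\<^sup>+t. ennreal l * (indicator {0..} t * ennreal (exp (\<gamma> * t))) \<partial>lborel)"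
  proof (intro nn_integral_cong)
    fix t :: real
    show "ennreal (exponential_density l t) * indicator (space lborel) t
        = ennreal l * (indicator {0..} t * ennreal (exp (\<gamma> * t)))"
    proof (cases "t < 0")
      case False
      then have "exponential_density l t = l * exp (\<gamma> * t)"
        by (simp add: exponential_density_def l_def mult.commute)
      then show ?thesis using False l by (simp add: ennreal_mult)
    qed (simp add: exponential_density_def)
  qed
  also have "\<dots> = ennreal l * (\<integral>\<^sup>+t. indicator {0..} t * ennreal (exp (\<gamma> * t)) \<partial>lborel)"
    by (rule nn_integral_cmult) measurable
  finally have "ennreal (1 / l) * 1
      = ennreal (1 / l) * ennreal l * (\<integral>\<^sup>+t. indicator {0..} t * ennreal (exp (\<gamma> * t)) \<partial>lborel)"
    by (simp add: mult.assoc)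
  also have "ennreal (1 / l) * ennreal l = 1"
    using l by (simp add: ennreal_mult[symmetric])
  finally show ?thesis by (simp add: l_def)
qed

lemma LIMSEQ_floor_grid: "(\<lambda>n. real_of_int \<lfloor>real (Suc n) * s\<rfloor> / real (Suc n)) \<longlonglongrightarrow> s"
proof (rule real_tendsto_sandwich[where f="\<lambda>n. s - 1 / real (Suc n)" and h="\<lambda>n. s"])
  show "\<forall>\<^sub>F n in sequentially. s - 1 / real (Suc n) \<le> real_of_int \<lfloor>real (Suc n) * s\<rfloor> / real (Suc n)"
  proof (intro always_eventually allI)
    fix n
    have "real (Suc n) * s - 1 \<le> real_of_int \<lfloor>real (Suc n) * s\<rfloor>" by linarith
    then have "(real (Suc n) * s - 1) / real (Suc n) \<le> real_of_int \<lfloor>real (Suc n) * s\<rfloor> / real (Suc n)"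
      by (rule divide_right_mono) simp
    then show "s - 1 / real (Suc n) \<le> real_of_int \<lfloor>real (Suc n) * s\<rfloor> / real (Suc n)"
      by (simp add: field_simps)
  qed
  have "real_of_int \<lfloor>real (Suc n) * s\<rfloor> \<le> real (Suc n) * s" for n by linarith
  then show "\<forall>\<^sub>F n in sequentially. real_of_int \<lfloor>real (Suc n) * s\<rfloor> / real (Suc n) \<le> s"
    by (simp add: field_simps)
  show "(\<lambda>n. s - 1 / real (Suc n)) \<longlonglongrightarrow> s"
    using tendsto_diff[OF tendsto_const[of s] LIMSEQ_inverse_real_of_nat]
    by (simp add: inverse_eq_divide)
qed simp

lemma borel_measurable_continuous_process:
  fixes X :: "real \<Rightarrow> 'a \<Rightarrow> real"
  assumes meas: "\<And>t. 0 \<le> t \<Longrightarrow> X t \<in> borel_measurable N"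
    and cont: "\<And>\<omega>. \<omega> \<in> space N \<Longrightarrow> continuous_on {0..} (\<lambda>t. X t \<omega>)"
  shows "(\<lambda>(\<omega>, t). X (max 0 t) \<omega>) \<in> borel_measurable (N \<Otimes>\<^sub>M lborel)"
proof -
  define grid :: "nat \<Rightarrow> real \<Rightarrow> real"
    where "grid n t = real_of_int \<lfloor>real (Suc n) * max 0 t\<rfloor> / real (Suc n)" for n t
  show ?thesis
  proof (rule borel_measurable_LIMSEQ_real[where u="\<lambda>n (\<omega>, t). X (grid n t) \<omega>"])
    fix p :: "'a \<times> real" assume p: "p \<in> space (N \<Otimes>\<^sub>M lborel)"
    obtain \<omega> t where p_eq: "p = (\<omega>, t)" by (cases p)
    with p have \<omega>: "\<omega> \<in> space N" by (simp add: space_pair_measure)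
    define s where "s = max 0 t"
    have grid_nonneg: "0 \<le> grid n t" for n by (simp add: grid_def)
    have "(\<lambda>n. grid n t) \<longlonglongrightarrow> s"
      unfolding grid_def s_def by (rule LIMSEQ_floor_grid)
    then have "(\<lambda>n. X (grid n t) \<omega>) \<longlonglongrightarrow> X s \<omega>"
      by (rule continuous_on_tendsto_compose[OF cont[OF \<omega>]]) (auto simp: s_def grid_nonneg)
    then show "(\<lambda>n. (\<lambda>(\<omega>, t). X (grid n t) \<omega>) p) \<longlonglongrightarrow> (\<lambda>(\<omega>, t). X (max 0 t) \<omega>) p"
      by (simp add: p_eq s_def)
  next
    fix n
    have "(\<lambda>p. (\<lambda>k::int. \<lambda>p. X (max 0 (real_of_int k / real (Suc n))) (fst p))
              \<lfloor>real (Suc n) * max 0 (snd p)\<rfloor> p) \<in> borel_measurable (N \<Otimes>\<^sub>M lborel)"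
    proof (rule measurable_compose_countable[where f="\<lambda>k p. X (max 0 (real_of_int k / real (Suc n))) (fst p)"])
      fix k :: int
      show "(\<lambda>p. X (max 0 (real_of_int k / real (Suc n))) (fst p)) \<in> borel_measurable (N \<Otimes>\<^sub>M lborel)"
        by (rule measurable_compose[OF measurable_fst meas]) simp
    qed (rule measurable_compose[OF _ measurable_real_floor], simp)
    moreover have "max 0 (grid n t) = grid n t" for t by (simp add: grid_def)
    ultimately show "(\<lambda>(\<omega>, t). X (grid n t) \<omega>) \<in> borel_measurable (N \<Otimes>\<^sub>M lborel)"
      by (simp add: grid_def case_prod_beta)
  qed
qed

lemma (in prob_space) nn_integral_mult_indep_var:
  fixes V W :: "'a \<Rightarrow> real"
  assumes "indep_var borel V borel W" and "\<And>\<omega>. 0 \<le> V \<omega>" and "\<And>\<omega>. 0 \<le> W \<omega>"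
  shows "(\<integral>\<^sup>+\<omega>. ennreal (V \<omega> * W \<omega>) \<partial>M) = (\<integral>\<^sup>+\<omega>. ennreal (V \<omega>) \<partial>M) * (\<integral>\<^sup>+\<omega>. ennreal (W \<omega>) \<partial>M)"
proof -
  from indep_var_compose[OF assms(1) measurable_ennreal measurable_ennreal]
  have "indep_var borel (\<lambda>\<omega>. ennreal (V \<omega>)) borel (\<lambda>\<omega>. ennreal (W \<omega>))"
    by (simp add: comp_def)
  moreover have "case_bool (borel::ennreal measure) borel = (\<lambda>_. borel)"
    by (rule ext) (simp split: bool.split)
  ultimately have indep: "indep_vars (\<lambda>_. borel) (case_bool (\<lambda>\<omega>. ennreal (V \<omega>)) (\<lambda>\<omega>. ennreal (W \<omega>))) UNIV"
    unfolding indep_var_def by simp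
  have "(\<integral>\<^sup>+\<omega>. (\<Prod>i\<in>UNIV. case_bool (\<lambda>\<omega>. ennreal (V \<omega>)) (\<lambda>\<omega>. ennreal (W \<omega>)) i \<omega>) \<partial>M)
     = (\<Prod>i\<in>UNIV. \<integral>\<^sup>+\<omega>. case_bool (\<lambda>\<omega>. ennreal (V \<omega>)) (\<lambda>\<omega>. ennreal (W \<omega>)) i \<omega> \<partial>M)"
    by (rule indep_vars_nn_integral[OF _ indep]) simp_all
  then show ?thesis using assms(2,3) by (simp add: UNIV_bool mult.commute ennreal_mult)
qed

lemma nn_integral_le_liminf_bound:
  fixes f :: "'a \<Rightarrow> ennreal" and u :: "nat \<Rightarrow> 'a \<Rightarrow> ennreal"
  assumes "\<And>k. u k \<in> borel_measurable N" and "\<And>\<omega>. \<omega> \<in> space N \<Longrightarrow> f \<omega> \<le> liminf (\<lambda>k. u k \<omega>)"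
    and "\<And>k. (\<integral>\<^sup>+\<omega>. u k \<omega> \<partial>N) \<le> c"
  shows "(\<integral>\<^sup>+\<omega>. f \<omega> \<partial>N) \<le> c"
proof -
  have "(\<integral>\<^sup>+\<omega>. f \<omega> \<partial>N) \<le> (\<integral>\<^sup>+\<omega>. liminf (\<lambda>k. u k \<omega>) \<partial>N)"
    using assms(2) by (intro nn_integral_mono)
  also have "\<dots> \<le> liminf (\<lambda>k. \<integral>\<^sup>+\<omega>. u k \<omega> \<partial>N)"
    by (rule nn_integral_liminf[OF assms(1)])
  also have "\<dots> \<le> c"
    by (rule Liminf_le) (simp_all add: assms(3))
  finally show ?thesis .
qed

lemma sets_PiM_prefix_sums:
  fixes C :: "nat \<Rightarrow> real set" and j :: "nat \<Rightarrow> nat"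
  assumes j: "\<forall>i<m. j i \<le> n" and C: "\<forall>i<m. C i \<in> sets borel"
  shows "{f \<in> space (PiM {..<n} (\<lambda>_. borel :: real measure)). \<forall>i\<in>{..<m}. (\<Sum>k<j i. f k) \<in> C i}
           \<in> sets (PiM {..<n} (\<lambda>_. borel :: real measure))"
proof -
  have "Measurable.pred (PiM {..<n} (\<lambda>_. borel :: real measure)) (\<lambda>f. \<forall>i\<in>{..<m}. (\<Sum>k<j i. f k) \<in> C i)"
  proof (rule pred_intros_finite(3))
    fix i assume i: "i \<in> {..<m}"
    show "Measurable.pred (PiM {..<n} (\<lambda>_. borel :: real measure)) (\<lambda>f. (\<Sum>k<j i. f k) \<in> C i)"
    proof (rule pred_sets2)
      show "C i \<in> sets borel" using C i by auto
      show "(\<lambda>f. \<Sum>k<j i. f k) \<in> borel_measurable (PiM {..<n} (\<lambda>_. borel :: real measure))"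
        using i j by (intro borel_measurable_sum measurable_component_singleton) auto
    qed
  qed simp
  then show ?thesis by (simp add: pred_def)
qed

lemma finite_set_in_increasing_grid:
  fixes T :: "real set"
  assumes "finite T" and "0 \<in> T" and "t \<in> T" and "T \<subseteq> {0..t}" and "t < s"
  obtains n u where "0 < n" and "u 0 = 0" and "\<forall>i<n. u i < u (Suc i)"
    and "u (n - 1) = t" and "u n = s" and "\<forall>x\<in>T. \<exists>k<n. u k = x"
proof -
  obtain L where L: "sorted_wrt (<) L" "set L = T"
    using finite_set_strict_sorted[OF \<open>finite T\<close>] by blast
  define n where "n = length L"
  have in_L: "x \<in> T \<Longrightarrow> \<exists>k<n. L!k = x" for x
    using L(2) by (auto simp: n_def in_set_conv_nth)
  have L_in: "k < n \<Longrightarrow> L!k \<in> T" for k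
    using L(2) by (auto simp: n_def)
  have L_less: "i < k \<Longrightarrow> k < n \<Longrightarrow> L!i < L!k" for i k
    using sorted_wrt_nth_less[OF L(1)] by (simp add: n_def)
  obtain k0 where k0: "k0 < n" "L!k0 = 0" using in_L[OF \<open>0 \<in> T\<close>] by blast
  obtain k1 where k1: "k1 < n" "L!k1 = t" using in_L[OF \<open>t \<in> T\<close>] by blast
  have "0 < n" using k0 by simp
  have "L!0 = 0"
    using L_less[of 0 k0] L_in[of 0] k0 \<open>0 < n\<close> \<open>T \<subseteq> {0..t}\<close>
    by (cases "k0 = 0") force+
  have "L!(n - 1) = t"
    using L_less[of k1 "n - 1"] L_in[of "n - 1"] k1 \<open>0 < n\<close> \<open>T \<subseteq> {0..t}\<close>
    by (cases "k1 = n - 1") force+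
  define u where "u j = (if j < n then L!j else s)" for j
  show ?thesis
  proof (rule that[of n u])
    show "\<forall>i<n. u i < u (Suc i)"
    proof (intro allI impI)
      fix i assume "i < n"
      show "u i < u (Suc i)"
      proof (cases "Suc i < n")
        case True then show ?thesis using L_less by (simp add: u_def)
      next
        case False then have "i = n - 1" using \<open>i < n\<close> by simp
        then show ?thesis using \<open>i < n\<close> False \<open>L!(n - 1) = t\<close> \<open>t < s\<close> by (simp add: u_def)
      qed
    qed
  qed (use \<open>0 < n\<close> \<open>L!0 = 0\<close> \<open>L!(n - 1) = t\<close> in_L in \<open>auto simp: u_def\<close>)
qed

lemma
  fixes h x :: real
  assumes "0 < h"
  shows le_ceiling_grid: "x \<le> h * real_of_int \<lceil>x / h\<rceil>"
    and ceiling_grid_less: "h * real_of_int \<lceil>x / h\<rceil> < x + h"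
proof -
  have "x / h \<le> real_of_int \<lceil>x / h\<rceil>" by linarith
  then have "h * (x / h) \<le> h * real_of_int \<lceil>x / h\<rceil>" using assms by (intro mult_left_mono) auto
  with assms show "x \<le> h * real_of_int \<lceil>x / h\<rceil>" by simp
  have "real_of_int \<lceil>x / h\<rceil> - 1 < x / h" by linarith
  with assms show "h * real_of_int \<lceil>x / h\<rceil> < x + h" by (simp add: field_simps)
qed

definition round_up :: "real \<Rightarrow> ennreal \<Rightarrow> ennreal" where
  "round_up h s = (if s = \<infinity> then \<infinity> else ennreal (h * real_of_int \<lceil>enn2real s / h\<rceil>))"

lemma borel_measurable_round_up [measurable (raw)]:
  assumes "T \<in> borel_measurable N"
  shows "(\<lambda>\<omega>. round_up h (T \<omega>)) \<in> borel_measurable N"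
proof -
  have "round_up h \<in> borel_measurable borel"
    unfolding round_up_def[abs_def] by measurable
  with assms show ?thesis by (rule measurable_compose)
qed

lemma round_up_top [simp]: "round_up h \<top> = \<top>"
  by (simp add: round_up_def)

lemma round_up_ennreal: "0 \<le> x \<Longrightarrow> round_up h (ennreal x) = ennreal (h * real_of_int \<lceil>x / h\<rceil>)"
  by (simp add: round_up_def)

lemma round_up_ge:
  assumes h: "0 < h" and lt: "ennreal (real m * h) < s"
  shows "ennreal (real m * h + h) \<le> round_up h s"
proof (cases s)
  case (real x)
  then have "real m * h < x" using lt h by (simp add: ennreal_less_iff)
  then have "int m < \<lceil>x / h\<rceil>" using h by (simp add: less_ceiling_iff field_simps)
  then have "(real m + 1) * h \<le> real_of_int \<lceil>x / h\<rceil> * h" using h by (intro mult_right_mono) auto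
  then show ?thesis using real by (simp add: round_up_ennreal algebra_simps ennreal_leI)
qed (simp add: round_up_def)

lemma round_up_le:
  assumes h: "0 < h" and le: "s \<le> ennreal (real m * h)"
  shows "round_up h s \<le> ennreal (real m * h)"
proof (cases s)
  case (real x)
  then have "x \<le> real m * h" using le h by (simp add: ennreal_le_iff)
  then have "\<lceil>x / h\<rceil> \<le> int m" using h by (simp add: ceiling_le_iff field_simps)
  then have "h * real_of_int \<lceil>x / h\<rceil> \<le> real m * h" using h by (simp add: mult.commute)
  then show ?thesis using real by (simp add: round_up_ennreal ennreal_leI)
qed (use le in \<open>simp add: round_up_def\<close>)

section \<open>Brownian motion and its filtrations\<close>

locale brownian_motion = prob_space M for M :: "'a measure" +
  fixes B :: "real \<Rightarrow> 'a \<Rightarrow> real"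
  assumes std_BM: "std_BM M B"
begin

abbreviation "P \<equiv> completion M"

lemma prob_space_P: "prob_space P"
  by (rule prob_space_completion)

lemma pair_sigma_finite_P_lborel: "pair_sigma_finite P (lborel :: real measure)"
proof -
  interpret P: prob_space P by (rule prob_space_P)
  show ?thesis unfolding pair_sigma_finite_def
    using P.sigma_finite_measure_axioms lborel.sigma_finite_measure_axioms by simp
qed

lemma borel_measurable_B: "0 \<le> t \<Longrightarrow> B t \<in> borel_measurable M"
  using std_BM by (simp add: std_BM_def)

lemma B_zero: "\<omega> \<in> space M \<Longrightarrow> B 0 \<omega> = 0"
  using std_BM by (simp add: std_BM_def)

lemma continuous_on_B: "\<omega> \<in> space M \<Longrightarrow> continuous_on {0..} (\<lambda>t. B t \<omega>)"
  using std_BM by (simp add: std_BM_def)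

lemma distributed_increment: "0 \<le> s \<Longrightarrow> s < t \<Longrightarrow>
    distributed M lborel (\<lambda>\<omega>. B t \<omega> - B s \<omega>) (\<lambda>x. ennreal (normal_density 0 (sqrt (t - s)) x))"
  using std_BM by (simp add: std_BM_def)

lemma indep_increments: "0 \<le> u 0 \<Longrightarrow> \<forall>i<n. u i < u (Suc i) \<Longrightarrow>
    indep_vars (\<lambda>_. borel) (\<lambda>i \<omega>. B (u (Suc i)) \<omega> - B (u i) \<omega>) {..<n}"
  using std_BM by (simp add: std_BM_def)

lemma borel_measurable_increment:
  "0 \<le> t \<Longrightarrow> t \<le> s \<Longrightarrow> (\<lambda>\<omega>. B s \<omega> - B t \<omega>) \<in> borel_measurable M"
  using borel_measurable_B by (intro borel_measurable_diff) auto

lemma nn_integral_exp_increment: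
  assumes "0 \<le> t" "t < s"
  shows "(\<integral>\<^sup>+\<omega>. ennreal (exp (c * (B s \<omega> - B t \<omega>))) \<partial>M) = ennreal (exp (c^2 * (s - t) / 2))"
proof -
  have "(\<integral>\<^sup>+\<omega>. ennreal (exp (c * (B s \<omega> - B t \<omega>))) \<partial>M)
     = (\<integral>\<^sup>+x. ennreal (normal_density 0 (sqrt (s - t)) x) * ennreal (exp (c * x)) \<partial>lborel)"
    by (rule distributed_nn_integral[OF distributed_increment[OF assms], symmetric]) simp
  also have "\<dots> = ennreal (exp (c^2 * (sqrt (s - t))^2 / 2))"
    using assms by (intro nn_integral_normal_density_exp) simp
  finally show ?thesis using assms by simp
qed

lemma borel_measurable_B_joint: "(\<lambda>(\<omega>, t). B (max 0 t) \<omega>) \<in> borel_measurable (P \<Otimes>\<^sub>M lborel)"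
  using borel_measurable_B continuous_on_B
  by (intro borel_measurable_continuous_process) (auto intro: measurable_completion)

lemma prob_grid_cylinder_Int_last_increment:
  fixes u :: "nat \<Rightarrow> real" and j :: "nat \<Rightarrow> nat"
  assumes "0 < n" and u0: "u 0 = 0" and u_inc: "\<forall>i<n. u i < u (Suc i)" and j: "\<forall>i<m. j i < n"
    and C: "\<forall>i<m. C i \<in> sets borel" and D: "D \<in> sets borel"
  shows "prob ({\<omega>\<in>space M. \<forall>i<m. B (u (j i)) \<omega> \<in> C i} \<inter> ((\<lambda>\<omega>. B (u n) \<omega> - B (u (n - 1)) \<omega>) -` D \<inter> space M))
       = prob {\<omega>\<in>space M. \<forall>i<m. B (u (j i)) \<omega> \<in> C i} * prob ((\<lambda>\<omega>. B (u n) \<omega> - B (u (n - 1)) \<omega>) -` D \<inter> space M)"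
proof -
  define X where "X i \<omega> = B (u (Suc i)) \<omega> - B (u i) \<omega>" for i \<omega>
  have "indep_vars (\<lambda>_. borel) X {..<n}"
    using indep_increments[of u n] u0 u_inc by (simp add: X_def[abs_def])
  then have indep: "indep_var (PiM {..<n-1} (\<lambda>_. borel)) (\<lambda>\<omega>. restrict (\<lambda>i. X i \<omega>) {..<n-1})
                            (PiM {n-1} (\<lambda>_. borel)) (\<lambda>\<omega>. restrict (\<lambda>i. X i \<omega>) {n-1})"
    by (rule indep_var_restrict) (use \<open>0 < n\<close> in auto)
  have B_telescope: "B (u k) \<omega> = (\<Sum>i<k. X i \<omega>)" if "\<omega> \<in> space M" for k \<omega>
    by (induction k) (simp_all add: u0 B_zero[OF that] X_def)
  define Ya where "Ya = {f \<in> space (PiM {..<n-1} (\<lambda>_. borel::real measure)). \<forall>i\<in>{..<m}. (\<Sum>k<j i. f k) \<in> C i}"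
  define Yb where "Yb = {f \<in> space (PiM {n-1} (\<lambda>_. borel::real measure)). f (n-1) \<in> D}"
  have Ya: "Ya \<in> sets (PiM {..<n-1} (\<lambda>_. borel))"
    unfolding Ya_def using j C by (intro sets_PiM_prefix_sums) auto
  have Yb: "Yb \<in> sets (PiM {n-1} (\<lambda>_. borel))"
  proof -
    have "Measurable.pred (PiM {n-1} (\<lambda>_. borel::real measure)) (\<lambda>f. f (n-1) \<in> D)"
      by (rule pred_sets2[OF D]) (rule measurable_component_singleton, simp)
    then show ?thesis by (simp add: pred_def Yb_def)
  qed
  have preimage_Ya: "(\<lambda>\<omega>. restrict (\<lambda>i. X i \<omega>) {..<n-1}) -` Ya \<inter> space M
      = {\<omega>\<in>space M. \<forall>i<m. B (u (j i)) \<omega> \<in> C i}"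
  proof -
    have "(\<Sum>k<j i. restrict (\<lambda>i. X i \<omega>) {..<n-1} k) = B (u (j i)) \<omega>" if "\<omega> \<in> space M" "i < m" for \<omega> i
    proof -
      have "(\<Sum>k<j i. restrict (\<lambda>i. X i \<omega>) {..<n-1} k) = (\<Sum>k<j i. X k \<omega>)"
        using j \<open>i < m\<close> by (intro sum.cong) auto
      then show ?thesis using B_telescope[OF \<open>\<omega> \<in> space M\<close>, of "j i"] by simp
    qed
    then show ?thesis by (auto simp: Ya_def space_PiM)
  qed
  have preimage_Yb: "(\<lambda>\<omega>. restrict (\<lambda>i. X i \<omega>) {n-1}) -` Yb \<inter> space M
      = (\<lambda>\<omega>. B (u n) \<omega> - B (u (n - 1)) \<omega>) -` D \<inter> space M"
    using \<open>0 < n\<close> by (auto simp: Yb_def space_PiM X_def)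
  have "(\<lambda>\<omega>. (restrict (\<lambda>i. X i \<omega>) {..<n-1}, restrict (\<lambda>i. X i \<omega>) {n-1})) -` (Ya \<times> Yb) \<inter> space M
     = {\<omega>\<in>space M. \<forall>i<m. B (u (j i)) \<omega> \<in> C i} \<inter> ((\<lambda>\<omega>. B (u n) \<omega> - B (u (n - 1)) \<omega>) -` D \<inter> space M)"
    using preimage_Ya preimage_Yb by blast
  with indep_varD[OF indep Ya Yb] show ?thesis
    unfolding preimage_Ya preimage_Yb by simp
qed

lemma prob_cylinder_Int_increment:
  fixes m :: nat and r :: "nat \<Rightarrow> real"
  assumes t: "0 \<le> t" "t < s" and r: "\<forall>i<m. r i \<in> {0..t}"
    and C: "\<forall>i<m. C i \<in> sets borel" and D: "D \<in> sets borel"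
  shows "prob ({\<omega>\<in>space M. \<forall>i<m. B (r i) \<omega> \<in> C i} \<inter> ((\<lambda>\<omega>. B s \<omega> - B t \<omega>) -` D \<inter> space M))
       = prob {\<omega>\<in>space M. \<forall>i<m. B (r i) \<omega> \<in> C i} * prob ((\<lambda>\<omega>. B s \<omega> - B t \<omega>) -` D \<inter> space M)"
proof -
  have grid_points: "insert 0 (insert t (r ` {..<m})) \<subseteq> {0..t}" using r t by auto
  obtain n u where "0 < n" and u0: "u 0 = 0" and u_inc: "\<forall>i<n. u i < u (Suc i)"
    and "u (n - 1) = t" and "u n = s" and u_hits: "\<forall>x\<in>insert 0 (insert t (r ` {..<m})). \<exists>k<n. u k = x"
    by (rule finite_set_in_increasing_grid[OF _ _ _ grid_points t(2)]) auto
  define j where "j i = (SOME k. k < n \<and> u k = r i)" for i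
  have j: "\<forall>i<m. j i < n \<and> u (j i) = r i"
  proof (intro allI impI)
    fix i assume "i < m"
    show "j i < n \<and> u (j i) = r i"
      unfolding j_def by (rule someI_ex) (use u_hits \<open>i < m\<close> in auto)
  qed
  then show ?thesis
    using prob_grid_cylinder_Int_last_increment[OF \<open>0 < n\<close> u0 u_inc _ C D, of j]
      \<open>u (n - 1) = t\<close> \<open>u n = s\<close>
    by simp
qed

lemma nat_filt_generators_subset:
  "(\<Union>s\<in>{s. 0 \<le> s \<and> ennreal s \<le> T}. {B s -` A \<inter> space M | A. A \<in> sets borel}) \<subseteq> sets M"
  using borel_measurable_B by (auto intro: measurable_sets)

lemma nat_filt_sets_subset: "nat_filt_sets M B T \<subseteq> sets M"
  unfolding nat_filt_sets_def by (rule sets.sigma_sets_subset[OF nat_filt_generators_subset])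

lemma nat_filt_sets_subset_Pow: "nat_filt_sets M B T \<subseteq> Pow (space M)"
  using nat_filt_sets_subset sets.sets_into_space by blast

lemma sigma_sets_nat_filt_sets: "sigma_sets (space M) (nat_filt_sets M B T) = nat_filt_sets M B T"
  unfolding nat_filt_sets_def
  by (rule sigma_sets_sigma_sets_eq) (use nat_filt_generators_subset sets.sets_into_space in blast)

lemma sets_aug_filt: "sets (aug_filt M B T) = sigma_sets (space M) (nat_filt_sets M B T \<union> null_sets P)"
proof -
  have "nat_filt_sets M B T \<union> null_sets P \<subseteq> Pow (space M)"
    using nat_filt_sets_subset_Pow null_sets.sets_into_space[of _ P] by auto
  then show ?thesis unfolding aug_filt_def by (simp add: sets_measure_of)
qed

lemma space_aug_filt: "space (aug_filt M B T) = space M"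
  unfolding aug_filt_def by (simp add: space_measure_of_conv)

lemma sets_aug_filt_subset: "sets (aug_filt M B T) \<subseteq> sets P"
proof -
  have "nat_filt_sets M B T \<union> null_sets P \<subseteq> sets P"
    using nat_filt_sets_subset by auto
  from sets.sigma_sets_subset[OF this] show ?thesis unfolding sets_aug_filt by simp
qed

lemma borel_measurable_stopping_time:
  assumes "stopping_time (aug_filt M B) T"
  shows "T \<in> borel_measurable P"
  by (rule measurable_stopping_time[OF assms]) (use sets_aug_filt_subset space_aug_filt in auto)

lemma aug_filt_sets_approx:
  assumes "A \<in> sets (aug_filt M B T)"
  obtains S N where "S \<in> nat_filt_sets M B T" and "N \<in> null_sets P" and "(A - S) \<union> (S - A) \<subseteq> N"
proof -
  have empty: "{} \<in> nat_filt_sets M B T"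
    unfolding nat_filt_sets_def by (rule sigma_sets.Empty)
  have "\<exists>S\<in>nat_filt_sets M B T. \<exists>N\<in>null_sets P. (A - S) \<union> (S - A) \<subseteq> N"
    using assms unfolding sets_aug_filt
  proof (induction rule: sigma_sets.induct)
    case (Basic a)
    then show ?case
    proof
      assume "a \<in> nat_filt_sets M B T"
      then show ?thesis by (intro bexI[of _ a] bexI[of _ "{}"]) auto
    next
      assume "a \<in> null_sets P"
      then show ?thesis using empty by (intro bexI[of _ "{}"] bexI[of _ a]) auto
    qed
  next
    case Empty
    then show ?case using empty by (intro bexI[of _ "{}"] bexI[of _ "{}"]) auto
  next
    case (Compl a)
    then obtain S N where S: "S \<in> nat_filt_sets M B T" "N \<in> null_sets P" "(a - S) \<union> (S - a) \<subseteq> N"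
      by blast
    have "space M - S \<in> nat_filt_sets M B T"
      using S(1) unfolding nat_filt_sets_def by (rule sigma_sets.Compl)
    then show ?case using S by (intro bexI[of _ "space M - S"] bexI[of _ N]) auto
  next
    case (Union a)
    then obtain S N where S: "\<And>i. S i \<in> nat_filt_sets M B T" "\<And>i. N i \<in> null_sets P"
      "\<And>i. (a i - S i) \<union> (S i - a i) \<subseteq> N i"
      by metis
    have "(\<Union>i. S i) \<in> nat_filt_sets M B T"
      using S(1) unfolding nat_filt_sets_def by (rule sigma_sets.Union)
    moreover have "(\<Union>i. N i) \<in> null_sets P" using S(2) by (rule null_sets_UN)
    moreover have "((\<Union>i. a i) - (\<Union>i. S i)) \<union> ((\<Union>i. S i) - (\<Union>i. a i)) \<subseteq> (\<Union>i. N i)"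
      using S(3) by blast
    ultimately show ?case by blast
  qed
  then show ?thesis using that by blast
qed

definition cylinders :: "real \<Rightarrow> 'a set set" where
  "cylinders t = {{\<omega>\<in>space M. \<forall>i<m. B (r i) \<omega> \<in> C i} | (m::nat) (r::nat \<Rightarrow> real) (C::nat \<Rightarrow> real set).
      (\<forall>i<m. r i \<in> {0..t}) \<and> (\<forall>i<m. C i \<in> sets borel)}"

lemma cylindersE:
  assumes "a \<in> cylinders t"
  obtains m :: nat and r C where "a = {\<omega>\<in>space M. \<forall>i<m. B (r i) \<omega> \<in> C i}"
    and "\<forall>i<m. r i \<in> {0..t}" and "\<forall>i<m. C i \<in> sets borel"
  using assms unfolding cylinders_def by blast

lemma cylinders_subset_events: "cylinders t \<subseteq> events"
proof
  fix a assume "a \<in> cylinders t"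
  then obtain m :: nat and r C where "a = {\<omega>\<in>space M. \<forall>i<m. B (r i) \<omega> \<in> C i}"
    and rC: "\<forall>i<m. r i \<in> {0..t}" "\<forall>i<m. C i \<in> sets borel"
    by (rule cylindersE)
  then have a: "a = {\<omega>\<in>space M. \<forall>i\<in>{..<m}. B (r i) \<omega> \<in> C i}" by auto
  have "{\<omega>\<in>space M. B (r i) \<omega> \<in> C i} \<in> events" if "i < m" for i
    using measurable_sets[OF borel_measurable_B, of "r i" "C i"] rC that by (simp add: vimage_def Int_def conj_commute)
  then show "a \<in> events" unfolding a by (intro sets.sets_Collect_finite_All) auto
qed

lemma Int_stable_cylinders: "Int_stable (cylinders t)"
proof (rule Int_stableI)
  fix a b assume "a \<in> cylinders t" "b \<in> cylinders t"
  then obtain m1 m2 :: nat and r1 r2 C1 C2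
    where a: "a = {\<omega>\<in>space M. \<forall>i<m1. B (r1 i) \<omega> \<in> C1 i}"
      and rC1: "\<forall>i<m1. r1 i \<in> {0..t}" "\<forall>i<m1. C1 i \<in> sets borel"
      and b: "b = {\<omega>\<in>space M. \<forall>i<m2. B (r2 i) \<omega> \<in> C2 i}"
      and rC2: "\<forall>i<m2. r2 i \<in> {0..t}" "\<forall>i<m2. C2 i \<in> sets borel"
    by (elim cylindersE)
  define r where "r i = (if i < m1 then r1 i else r2 (i - m1))" for i
  define C where "C i = (if i < m1 then C1 i else C2 (i - m1))" for i
  have "a \<inter> b = {\<omega>\<in>space M. \<forall>i<m1+m2. B (r i) \<omega> \<in> C i}"
  proof (intro set_eqI iffI)
    fix \<omega> assume "\<omega> \<in> {\<omega>\<in>space M. \<forall>i<m1+m2. B (r i) \<omega> \<in> C i}"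
    then have "\<omega> \<in> space M" and all: "\<And>i. i < m1 + m2 \<Longrightarrow> B (r i) \<omega> \<in> C i" by auto
    have "B (r2 i) \<omega> \<in> C2 i" if "i < m2" for i
      using all[of "i + m1"] that by (simp add: r_def C_def)
    moreover have "B (r1 i) \<omega> \<in> C1 i" if "i < m1" for i
      using all[of i] that by (simp add: r_def C_def)
    ultimately show "\<omega> \<in> a \<inter> b" using \<open>\<omega> \<in> space M\<close> unfolding a b by auto
  qed (auto simp: a b r_def C_def)
  moreover have "\<forall>i<m1+m2. r i \<in> {0..t}" "\<forall>i<m1+m2. C i \<in> sets borel"
    using rC1 rC2 by (auto simp: r_def C_def)
  ultimately show "a \<inter> b \<in> cylinders t" unfolding cylinders_def by blast
qed

lemma nat_filt_sets_subset_cylinders: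
  assumes "0 \<le> t"
  shows "nat_filt_sets M B (ennreal t) \<subseteq> sigma_sets (space M) (cylinders t)"
  unfolding nat_filt_sets_def
proof (intro sigma_sets_mono subsetI)
  fix x assume "x \<in> (\<Union>s\<in>{s. 0 \<le> s \<and> ennreal s \<le> ennreal t}. {B s -` A \<inter> space M | A. A \<in> sets borel})"
  then obtain r A where "0 \<le> r" "ennreal r \<le> ennreal t" "A \<in> sets borel" "x = B r -` A \<inter> space M"
    by blast
  moreover have "r \<le> t" using calculation assms by simp
  ultimately have "x = {\<omega>\<in>space M. \<forall>i<(1::nat). B ((\<lambda>_. r) i) \<omega> \<in> (\<lambda>_. A) i}"
    and "\<forall>i<(1::nat). (\<lambda>_. r) i \<in> {0..t}" "\<forall>i<(1::nat). (\<lambda>_. A) i \<in> sets borel"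
    by auto
  then have "x \<in> cylinders t"
    unfolding cylinders_def by (intro CollectI exI[of _ "1::nat"] exI[of _ "\<lambda>_. r"] exI[of _ "\<lambda>_. A"]) simp
  then show "x \<in> sigma_sets (space M) (cylinders t)" by (rule sigma_sets.Basic)
qed

lemma indep_set_nat_filt_increment:
  assumes "0 \<le> t" "t < s"
  shows "indep_set (nat_filt_sets M B (ennreal t))
           (sigma_sets (space M) {(\<lambda>\<omega>. B s \<omega> - B t \<omega>) -` A \<inter> space M | A. A \<in> sets borel})"
proof -
  define G where "G = {(\<lambda>\<omega>. B s \<omega> - B t \<omega>) -` A \<inter> space M | A. A \<in> sets borel}"
  have "indep_set (cylinders t) G"
    unfolding indep_sets2_eq
  proof (intro conjI ballI cylinders_subset_events)
    show "G \<subseteq> events"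
      unfolding G_def using borel_measurable_increment[OF assms(1) less_imp_le[OF assms(2)]]
      by (auto intro: measurable_sets)
    fix a b assume "a \<in> cylinders t" "b \<in> G"
    from \<open>b \<in> G\<close> obtain D where "D \<in> sets borel" and b: "b = (\<lambda>\<omega>. B s \<omega> - B t \<omega>) -` D \<inter> space M"
      unfolding G_def by blast
    from \<open>a \<in> cylinders t\<close> show "prob (a \<inter> b) = prob a * prob b"
    proof (rule cylindersE)
      fix m :: nat and r C
      assume "a = {\<omega>\<in>space M. \<forall>i<m. B (r i) \<omega> \<in> C i}" "\<forall>i<m. r i \<in> {0..t}" "\<forall>i<m. C i \<in> sets borel"
      then show ?thesis
        unfolding b using prob_cylinder_Int_increment[OF assms _ _ \<open>D \<in> sets borel\<close>] by simp
    qed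
  qed
  moreover have "Int_stable G"
  proof (rule Int_stableI)
    fix a b assume "a \<in> G" "b \<in> G"
    then obtain A A' :: "real set" where "a = (\<lambda>\<omega>. B s \<omega> - B t \<omega>) -` A \<inter> space M" "A \<in> sets borel"
      "b = (\<lambda>\<omega>. B s \<omega> - B t \<omega>) -` A' \<inter> space M" "A' \<in> sets borel"
      unfolding G_def by blast
    then show "a \<inter> b \<in> G" unfolding G_def by (intro CollectI exI[of _ "A \<inter> A'"]) auto
  qed
  ultimately have "indep_set (sigma_sets (space M) (cylinders t)) (sigma_sets (space M) G)"
    using Int_stable_cylinders by (intro indep_set_sigma_sets)
  then have "sigma_sets (space M) (cylinders t) \<subseteq> events" "sigma_sets (space M) G \<subseteq> events"
    and indep: "\<And>a b. a \<in> sigma_sets (space M) (cylinders t) \<Longrightarrow> b \<in> sigma_sets (space M) G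
      \<Longrightarrow> prob (a \<inter> b) = prob a * prob b"
    unfolding indep_sets2_eq by auto
  with nat_filt_sets_subset_cylinders[OF assms(1)] show ?thesis
    unfolding G_def[symmetric] indep_sets2_eq by (intro conjI ballI indep) auto
qed

abbreviation nat_filt :: "real \<Rightarrow> 'a measure" where
  "nat_filt t \<equiv> sigma (space M) (nat_filt_sets M B (ennreal t))"

lemma space_nat_filt: "space (nat_filt t) = space M"
  by (simp add: space_measure_of_conv)

lemma sets_nat_filt: "sets (nat_filt t) = nat_filt_sets M B (ennreal t)"
  using nat_filt_sets_subset_Pow by (simp add: sets_measure_of sigma_sets_nat_filt_sets)

lemma subalgebra_nat_filt: "subalgebra M (nat_filt t)"
  unfolding subalgebra_def using sets_nat_filt nat_filt_sets_subset space_nat_filt by simp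

lemma borel_measurable_B_nat_filt:
  assumes "0 \<le> r" "r \<le> t" shows "B r \<in> borel_measurable (nat_filt t)"
proof (rule measurableI)
  fix A :: "real set" assume "A \<in> sets borel"
  then have "B r -` A \<inter> space M \<in> nat_filt_sets M B (ennreal t)"
    unfolding nat_filt_sets_def by (intro sigma_sets.Basic) (use assms in \<open>auto intro: ennreal_leI\<close>)
  then show "B r -` A \<inter> space (nat_filt t) \<in> sets (nat_filt t)"
    by (simp add: sets_nat_filt space_nat_filt)
qed simp

lemma nn_integral_mult_increment:
  fixes V :: "'a \<Rightarrow> real" and g :: "real \<Rightarrow> real"
  assumes t: "0 \<le> t" "t < s" and V: "V \<in> borel_measurable (nat_filt t)" "\<And>\<omega>. 0 \<le> V \<omega>"
    and g: "g \<in> borel_measurable borel" "\<And>x. 0 \<le> g x"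
  shows "(\<integral>\<^sup>+\<omega>. ennreal (V \<omega> * g (B s \<omega> - B t \<omega>)) \<partial>M)
       = (\<integral>\<^sup>+\<omega>. ennreal (V \<omega>) \<partial>M) * (\<integral>\<^sup>+\<omega>. ennreal (g (B s \<omega> - B t \<omega>)) \<partial>M)"
proof -
  define W where "W \<omega> = g (B s \<omega> - B t \<omega>)" for \<omega>
  have V_M: "V \<in> borel_measurable M" by (rule measurable_from_subalg[OF subalgebra_nat_filt V(1)])
  have W_M: "W \<in> borel_measurable M"
    unfolding W_def using borel_measurable_increment t by (auto intro: measurable_compose[OF _ g(1)])
  have V_sets: "sigma_sets (space M) {V -` A \<inter> space M | A. A \<in> sets borel} \<subseteq> nat_filt_sets M B (ennreal t)"
  proof -
    have "{V -` A \<inter> space M | A. A \<in> sets borel} \<subseteq> sigma_sets (space M) (nat_filt_sets M B (ennreal t))"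
      using measurable_sets[OF V(1)] by (auto simp: sets_nat_filt space_nat_filt sigma_sets_nat_filt_sets)
    then show ?thesis by (subst sigma_sets_nat_filt_sets[symmetric]) (rule sigma_sets_mono)
  qed
  have W_sets: "sigma_sets (space M) {W -` A \<inter> space M | A. A \<in> sets borel}
     \<subseteq> sigma_sets (space M) {(\<lambda>\<omega>. B s \<omega> - B t \<omega>) -` A \<inter> space M | A. A \<in> sets borel}"
  proof (intro sigma_sets_subseteq subsetI)
    fix x assume "x \<in> {W -` A \<inter> space M | A. A \<in> sets borel}"
    then obtain A :: "real set" where A: "A \<in> sets borel" "x = W -` A \<inter> space M" by blast
    then have "g -` A \<in> sets borel" using measurable_sets[OF g(1) A(1)] by simp
    moreover have "x = (\<lambda>\<omega>. B s \<omega> - B t \<omega>) -` (g -` A) \<inter> space M" using A by (auto simp: W_def)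
    ultimately show "x \<in> {(\<lambda>\<omega>. B s \<omega> - B t \<omega>) -` A \<inter> space M | A. A \<in> sets borel}" by blast
  qed
  have "indep_set (sigma_sets (space M) {V -` A \<inter> space M | A. A \<in> sets borel})
                  (sigma_sets (space M) {W -` A \<inter> space M | A. A \<in> sets borel})"
    using indep_set_nat_filt_increment[OF t] V_sets W_sets
    unfolding indep_sets2_eq by (meson subsetD subset_trans)
  then have "indep_var borel V borel W"
    unfolding indep_var_eq using V_M W_M by simp
  then have "(\<integral>\<^sup>+\<omega>. ennreal (V \<omega> * W \<omega>) \<partial>M) = (\<integral>\<^sup>+\<omega>. ennreal (V \<omega>) \<partial>M) * (\<integral>\<^sup>+\<omega>. ennreal (W \<omega>) \<partial>M)"
    by (rule nn_integral_mult_indep_var) (simp_all add: V(2) W_def g(2))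
  then show ?thesis by (simp add: W_def)
qed

end

section \<open>The discounted price process\<close>

text \<open>For \<open>\<gamma> = \<theta> - \<alpha> - \<rho> - \<mu>\<close> the process \<open>Z\<close> below is the discounted price
  divided by \<open>x\<close> (lemma \<open>discounted_GBM_eq_Z\<close>).\<close>

locale discounted_price = brownian_motion +
  fixes \<gamma> \<sigma> :: real
  assumes \<gamma>_neg: "\<gamma> < 0"
begin

definition Z :: "real \<Rightarrow> 'a \<Rightarrow> real" where
  "Z t \<omega> = exp (\<gamma> * t + \<sigma> * B (max 0 t) \<omega> - \<sigma>^2 / 2 * t)"

lemma Z_pos: "0 < Z t \<omega>"
  by (simp add: Z_def)

lemma Z_zero: "\<omega> \<in> space M \<Longrightarrow> Z 0 \<omega> = 1"
  by (simp add: Z_def B_zero)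

lemma borel_measurable_Z_joint [measurable]:
  "(\<lambda>p. Z (snd p) (fst p)) \<in> borel_measurable (P \<Otimes>\<^sub>M lborel)"
proof -
  note [measurable] = borel_measurable_B_joint
  have "(\<lambda>p. exp (\<gamma> * snd p + \<sigma> * (\<lambda>(\<omega>, t). B (max 0 t) \<omega>) p - \<sigma>^2 / 2 * snd p))
      \<in> borel_measurable (P \<Otimes>\<^sub>M lborel)"
    by measurable
  then show ?thesis by (simp add: Z_def case_prod_beta)
qed

lemma borel_measurable_Z: "Z t \<in> borel_measurable M"
proof -
  have [measurable]: "B (max 0 t) \<in> borel_measurable M" by (rule borel_measurable_B) simp
  show ?thesis unfolding Z_def[abs_def] by measurable
qed

lemma borel_measurable_Z_P [measurable]: "Z t \<in> borel_measurable P"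
  using borel_measurable_Z by (rule measurable_completion)

lemma borel_measurable_Z_nat_filt: "0 \<le> t \<Longrightarrow> Z t \<in> borel_measurable (nat_filt t)"
proof -
  assume "0 \<le> t"
  then have [measurable]: "B (max 0 t) \<in> borel_measurable (nat_filt t)"
    by (intro borel_measurable_B_nat_filt) auto
  show ?thesis unfolding Z_def[abs_def] by measurable
qed

lemma borel_measurable_Z_path: "\<omega> \<in> space M \<Longrightarrow> (\<lambda>t. Z t \<omega>) \<in> borel_measurable lborel"
  using measurable_Pair2[OF borel_measurable_Z_joint, of \<omega>] by simp

lemma continuous_on_Z: "\<omega> \<in> space M \<Longrightarrow> continuous_on {0..} (\<lambda>t. Z t \<omega>)"
proof -
  assume "\<omega> \<in> space M"
  then have "continuous_on {0..} (\<lambda>t. exp (\<gamma> * t + \<sigma> * B t \<omega> - \<sigma>^2 / 2 * t))"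
    using continuous_on_B by (intro continuous_intros) auto
  then show ?thesis by (rule continuous_on_cong[THEN iffD1, rotated 2]) (auto simp: Z_def)
qed

lemma Z_eq_Z_mult_increment:
  assumes "0 \<le> t" "t \<le> s"
  shows "Z s \<omega> = exp (\<gamma> * (s - t) - \<sigma>^2 / 2 * (s - t)) * (Z t \<omega> * exp (\<sigma> * (B s \<omega> - B t \<omega>)))"
proof -
  have "\<gamma> * s + \<sigma> * B s \<omega> - \<sigma>^2 / 2 * s
      = (\<gamma> * (s - t) - \<sigma>^2 / 2 * (s - t)) + ((\<gamma> * t + \<sigma> * B t \<omega> - \<sigma>^2 / 2 * t) + \<sigma> * (B s \<omega> - B t \<omega>))"
    by (simp add: field_simps)
  moreover have "max 0 s = s" "max 0 t = t" using assms by auto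
  ultimately show ?thesis unfolding Z_def by (simp only: exp_add)
qed

text \<open>The martingale property of \<open>exp (-\<gamma> t) Z t\<close>, tested on events of the past.\<close>

lemma nn_integral_Z_on_nat_filt_event:
  assumes t: "0 \<le> t" "t \<le> s" and S: "S \<in> nat_filt_sets M B (ennreal t)"
  shows "(\<integral>\<^sup>+\<omega>. indicator S \<omega> * ennreal (Z s \<omega>) \<partial>M)
       = ennreal (exp (\<gamma> * (s - t))) * (\<integral>\<^sup>+\<omega>. indicator S \<omega> * ennreal (Z t \<omega>) \<partial>M)"
proof (cases "s = t")
  case False
  then have "t < s" using t by simp
  define V where "V \<omega> = indicator S \<omega> * Z t \<omega>" for \<omega>
  define c where "c = exp (\<gamma> * (s - t) - \<sigma>^2 / 2 * (s - t))"
  have V_nat_filt: "V \<in> borel_measurable (nat_filt t)"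
    unfolding V_def[abs_def] using S borel_measurable_Z_nat_filt[OF t(1)]
    by (intro borel_measurable_times borel_measurable_indicator) (simp_all add: sets_nat_filt)
  have V_M [measurable]: "V \<in> borel_measurable M"
    by (rule measurable_from_subalg[OF subalgebra_nat_filt V_nat_filt])
  have V_nonneg: "0 \<le> V \<omega>" for \<omega> using Z_pos[of t \<omega>] by (simp add: V_def)
  have [measurable]: "B s \<in> borel_measurable M" "B t \<in> borel_measurable M"
    using borel_measurable_B t by auto
  have "indicator S \<omega> * ennreal (Z s \<omega>) = ennreal c * ennreal (V \<omega> * exp (\<sigma> * (B s \<omega> - B t \<omega>)))"
    for \<omega>
    using Z_eq_Z_mult_increment[OF t, of \<omega>] less_imp_le[OF Z_pos[of t \<omega>]]
    by (auto simp: V_def c_def indicator_def ennreal_mult)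
  then have "(\<integral>\<^sup>+\<omega>. indicator S \<omega> * ennreal (Z s \<omega>) \<partial>M)
      = (\<integral>\<^sup>+\<omega>. ennreal c * ennreal (V \<omega> * exp (\<sigma> * (B s \<omega> - B t \<omega>))) \<partial>M)"
    by (simp only:)
  also have "\<dots> = ennreal c * (\<integral>\<^sup>+\<omega>. ennreal (V \<omega> * exp (\<sigma> * (B s \<omega> - B t \<omega>))) \<partial>M)"
    by (rule nn_integral_cmult) measurable
  also have "(\<integral>\<^sup>+\<omega>. ennreal (V \<omega> * exp (\<sigma> * (B s \<omega> - B t \<omega>))) \<partial>M)
      = (\<integral>\<^sup>+\<omega>. ennreal (V \<omega>) \<partial>M) * ennreal (exp (\<sigma>^2 * (s - t) / 2))"
    using nn_integral_mult_increment[OF t(1) \<open>t < s\<close> V_nat_filt V_nonneg, of "\<lambda>x. exp (\<sigma> * x)"]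
      nn_integral_exp_increment[OF t(1) \<open>t < s\<close>] by simp
  also have "(\<integral>\<^sup>+\<omega>. ennreal (V \<omega>) \<partial>M) = (\<integral>\<^sup>+\<omega>. indicator S \<omega> * ennreal (Z t \<omega>) \<partial>M)"
    by (intro nn_integral_cong) (simp add: V_def indicator_def)
  also have "ennreal c * (\<dots> * ennreal (exp (\<sigma>^2 * (s - t) / 2)))
      = ennreal (c * exp (\<sigma>^2 * (s - t) / 2)) * (\<integral>\<^sup>+\<omega>. indicator S \<omega> * ennreal (Z t \<omega>) \<partial>M)"
    using ennreal_mult[of c "exp (\<sigma>^2 * (s - t) / 2)"] by (simp add: c_def mult_ac)
  also have "c * exp (\<sigma>^2 * (s - t) / 2) = exp (\<gamma> * (s - t))"
    unfolding c_def by (simp add: exp_add[symmetric] algebra_simps)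
  finally show ?thesis .
qed simp

lemma nn_integral_Z_on_event:
  assumes t: "0 \<le> t" "t \<le> s" and A: "A \<in> sets (aug_filt M B (ennreal t))"
  shows "(\<integral>\<^sup>+\<omega>. indicator A \<omega> * ennreal (Z s \<omega>) \<partial>P)
       = ennreal (exp (\<gamma> * (s - t))) * (\<integral>\<^sup>+\<omega>. indicator A \<omega> * ennreal (Z t \<omega>) \<partial>P)"
proof -
  obtain S N where S: "S \<in> nat_filt_sets M B (ennreal t)" and N: "N \<in> null_sets P"
    and SN: "(A - S) \<union> (S - A) \<subseteq> N"
    using aug_filt_sets_approx[OF A] by blast
  have eq: "(\<integral>\<^sup>+\<omega>. indicator A \<omega> * ennreal (Z r \<omega>) \<partial>P) = (\<integral>\<^sup>+\<omega>. indicator S \<omega> * ennreal (Z r \<omega>) \<partial>M)"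
    for r
  proof -
    have "(\<integral>\<^sup>+\<omega>. indicator A \<omega> * ennreal (Z r \<omega>) \<partial>P) = (\<integral>\<^sup>+\<omega>. indicator S \<omega> * ennreal (Z r \<omega>) \<partial>P)"
    proof (rule nn_integral_cong_AE)
      show "AE \<omega> in P. indicator A \<omega> * ennreal (Z r \<omega>) = indicator S \<omega> * ennreal (Z r \<omega>)"
        using AE_not_in[OF N]
      proof (rule AE_mp, intro AE_I2 impI)
        fix \<omega> assume "\<omega> \<notin> N"
        then have "(\<omega> \<in> A) = (\<omega> \<in> S)" using SN by blast
        then show "indicator A \<omega> * ennreal (Z r \<omega>) = indicator S \<omega> * ennreal (Z r \<omega>)"
          by (simp add: indicator_def)
      qed
    qed
    also have "\<dots> = (\<integral>\<^sup>+\<omega>. indicator S \<omega> * ennreal (Z r \<omega>) \<partial>M)"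
      by (rule nn_integral_completion)
    finally show ?thesis .
  qed
  show ?thesis unfolding eq by (rule nn_integral_Z_on_nat_filt_event[OF t S])
qed

lemma nn_integral_Z:
  assumes "0 \<le> s"
  shows "(\<integral>\<^sup>+\<omega>. ennreal (Z s \<omega>) \<partial>P) = ennreal (exp (\<gamma> * s))"
proof -
  have "space M \<in> sets (aug_filt M B (ennreal 0))"
    using sets.top[of "aug_filt M B (ennreal 0)"] by (simp add: space_aug_filt)
  from nn_integral_Z_on_event[OF order_refl assms this]
  have "(\<integral>\<^sup>+\<omega>. indicator (space M) \<omega> * ennreal (Z s \<omega>) \<partial>P)
     = ennreal (exp (\<gamma> * s)) * (\<integral>\<^sup>+\<omega>. indicator (space M) \<omega> * ennreal (Z 0 \<omega>) \<partial>P)"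
    by simp
  also have "(\<integral>\<^sup>+\<omega>. indicator (space M) \<omega> * ennreal (Z 0 \<omega>) \<partial>P) = (\<integral>\<^sup>+\<omega>. 1 \<partial>P)"
    by (intro nn_integral_cong) (simp add: Z_zero)
  also have "(\<integral>\<^sup>+\<omega>. indicator (space M) \<omega> * ennreal (Z s \<omega>) \<partial>P) = (\<integral>\<^sup>+\<omega>. ennreal (Z s \<omega>) \<partial>P)"
    by (intro nn_integral_cong) simp
  finally show ?thesis
    using prob_space.emeasure_space_1[OF prob_space_P] by simp
qed

section \<open>Optional stopping for \<open>U\<close>\<close>

definition time_upto :: "ennreal \<Rightarrow> real set" where
  "time_upto s = {t. 0 \<le> t \<and> ennreal t \<le> s}"

definition IZ :: "'a \<Rightarrow> ennreal \<Rightarrow> ennreal" where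
  "IZ \<omega> s = (\<integral>\<^sup>+t. indicator (time_upto s) t * ennreal (Z t \<omega>) \<partial>lborel)"

text \<open>Since \<open>dZ = \<gamma> Z dt + \<sigma> Z dB\<close>, the process \<open>U\<close> is a martingale started at \<open>1\<close>; the
  optional stopping inequality below is all that is needed from it.\<close>

definition U :: "'a \<Rightarrow> ennreal \<Rightarrow> ennreal" where
  "U \<omega> s = ennreal (- \<gamma>) * IZ \<omega> s + (if s = \<infinity> then 0 else ennreal (Z (enn2real s) \<omega>))"

lemma time_upto_ennreal: "0 \<le> x \<Longrightarrow> time_upto (ennreal x) = {0..x}"
  by (auto simp: time_upto_def)

lemma time_upto_top: "time_upto \<infinity> = {0..}"
  by (auto simp: time_upto_def)

lemma borel_measurable_nn_integral_Z [measurable]: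
  assumes [measurable]: "S \<in> sets borel"
  shows "(\<lambda>\<omega>. \<integral>\<^sup>+t. indicator S t * ennreal (Z t \<omega>) \<partial>lborel) \<in> borel_measurable P"
proof -
  have "(\<lambda>p. indicator S (snd p) * ennreal (Z (snd p) (fst p))) \<in> borel_measurable (P \<Otimes>\<^sub>M lborel)"
    by measurable
  then have "(\<lambda>(\<omega>, t). indicator S t * ennreal (Z t \<omega>)) \<in> borel_measurable (P \<Otimes>\<^sub>M lborel)"
    by (simp add: case_prod_beta)
  from lborel.borel_measurable_nn_integral[OF this] show ?thesis by simp
qed

lemma borel_measurable_IZ [measurable]:
  assumes [measurable]: "T \<in> borel_measurable P"
  shows "(\<lambda>\<omega>. IZ \<omega> (T \<omega>)) \<in> borel_measurable P"
proof -
  have "(\<lambda>p. indicator (time_upto (T (fst p))) (snd p) * ennreal (Z (snd p) (fst p)))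
      = (\<lambda>p. (if 0 \<le> snd p \<and> ennreal (snd p) \<le> T (fst p) then 1 else 0) * ennreal (Z (snd p) (fst p)))"
    by (auto simp: time_upto_def indicator_def fun_eq_iff)
  also have "\<dots> \<in> borel_measurable (P \<Otimes>\<^sub>M lborel)" by measurable
  finally have "(\<lambda>(\<omega>, t). indicator (time_upto (T \<omega>)) t * ennreal (Z t \<omega>)) \<in> borel_measurable (P \<Otimes>\<^sub>M lborel)"
    by (simp add: case_prod_beta)
  from lborel.borel_measurable_nn_integral[OF this] show ?thesis by (simp add: IZ_def)
qed

lemma borel_measurable_U [measurable]:
  assumes [measurable]: "T \<in> borel_measurable P"
  shows "(\<lambda>\<omega>. U \<omega> (T \<omega>)) \<in> borel_measurable P"
proof -
  have "(\<lambda>\<omega>. (\<omega>, enn2real (T \<omega>))) \<in> P \<rightarrow>\<^sub>M P \<Otimes>\<^sub>M lborel"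
    by (intro measurable_Pair measurable_ident_sets) (simp_all add: measurable_lborel2)
  from measurable_compose[OF this borel_measurable_Z_joint]
  have [measurable]: "(\<lambda>\<omega>. Z (enn2real (T \<omega>)) \<omega>) \<in> borel_measurable P" by simp
  show ?thesis unfolding U_def by measurable
qed

lemma IZ_mono: "s \<le> s' \<Longrightarrow> IZ \<omega> s \<le> IZ \<omega> s'"
  unfolding IZ_def by (intro nn_integral_mono) (auto simp: indicator_def time_upto_def order_trans)

lemma IZ_zero: "IZ \<omega> 0 = 0"
proof -
  have "IZ \<omega> 0 = (\<integral>\<^sup>+(t::real). 0 \<partial>lborel)"
    unfolding IZ_def
  proof (rule nn_integral_cong_AE)
    show "AE t in lborel. indicator (time_upto 0) t * ennreal (Z t \<omega>) = 0"
      using AE_lborel_singleton[of 0] by eventually_elim (auto simp: time_upto_def indicator_def)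
  qed
  then show ?thesis by simp
qed

lemma U_zero: "\<omega> \<in> space M \<Longrightarrow> U \<omega> 0 = 1"
  using IZ_zero Z_zero by (simp add: U_def)

lemma U_ennreal: "0 \<le> x \<Longrightarrow> U \<omega> (ennreal x) = ennreal (- \<gamma>) * IZ \<omega> (ennreal x) + ennreal (Z x \<omega>)"
  by (simp add: U_def)

lemma IZ_add:
  assumes \<omega>: "\<omega> \<in> space M" and "0 \<le> a" "0 \<le> h"
  shows "IZ \<omega> (ennreal (a + h)) = IZ \<omega> (ennreal a) + (\<integral>\<^sup>+t. indicator {a<..a+h} t * ennreal (Z t \<omega>) \<partial>lborel)"
proof -
  have [measurable]: "(\<lambda>t. Z t \<omega>) \<in> borel_measurable lborel" by (rule borel_measurable_Z_path[OF \<omega>])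
  have "IZ \<omega> (ennreal (a + h))
      = (\<integral>\<^sup>+t. indicator {0..a} t * ennreal (Z t \<omega>) + indicator {a<..a+h} t * ennreal (Z t \<omega>) \<partial>lborel)"
    unfolding IZ_def time_upto_ennreal[OF add_nonneg_nonneg[OF assms(2,3)]]
    using assms by (intro nn_integral_cong) (auto simp: indicator_def)
  also have "\<dots> = (\<integral>\<^sup>+t. indicator {0..a} t * ennreal (Z t \<omega>) \<partial>lborel)
      + (\<integral>\<^sup>+t. indicator {a<..a+h} t * ennreal (Z t \<omega>) \<partial>lborel)"
    by (rule nn_integral_add) measurable
  also have "(\<integral>\<^sup>+t. indicator {0..a} t * ennreal (Z t \<omega>) \<partial>lborel) = IZ \<omega> (ennreal a)"
    unfolding IZ_def time_upto_ennreal[OF assms(2)] ..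
  finally show ?thesis .
qed

lemma IZ_tendsto_top:
  assumes \<omega>: "\<omega> \<in> space M" and h: "0 < h"
  shows "(\<lambda>k. IZ \<omega> (ennreal (real k * h))) \<longlonglongrightarrow> IZ \<omega> \<infinity>"
proof -
  have [measurable]: "(\<lambda>t. Z t \<omega>) \<in> borel_measurable borel"
    using borel_measurable_Z_path[OF \<omega>] by simp
  define f where "f k t = indicator {0..real k * h} t * ennreal (Z t \<omega>)" for k t
  have mono: "real k * h \<le> real l * h" if "k \<le> l" for k l
    using h that by (simp add: mult_right_mono)
  have inc: "incseq f"
  proof (intro monoI le_funI)
    fix k l :: nat and t assume "k \<le> l"
    then have "real k * h \<le> real l * h" by (rule mono)
    then show "f k t \<le> f l t" by (auto simp: f_def indicator_def)
  qed
  have sup: "(SUP k. f k t) = indicator {0..} t * ennreal (Z t \<omega>)" for t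
  proof (cases "0 \<le> t")
    case True
    obtain K where "t < real K * h" using reals_Archimedean3[OF h] by blast
    with True have "f K t = ennreal (Z t \<omega>)" by (simp add: f_def)
    moreover have "f k t \<le> ennreal (Z t \<omega>)" for k by (simp add: f_def indicator_def)
    ultimately show ?thesis
      using True by (intro antisym SUP_least) (auto intro: SUP_upper2[of K])
  qed (simp add: f_def)
  have "IZ \<omega> \<infinity> = (\<integral>\<^sup>+t. (SUP k. f k t) \<partial>lborel)"
    unfolding IZ_def sup time_upto_top ..
  also have "\<dots> = (SUP k. \<integral>\<^sup>+t. f k t \<partial>lborel)"
    by (rule nn_integral_monotone_convergence_SUP[OF inc]) (unfold f_def, measurable)
  also have "\<dots> = (SUP k. IZ \<omega> (ennreal (real k * h)))"
    using h by (simp add: f_def IZ_def time_upto_ennreal)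
  finally have "IZ \<omega> \<infinity> = (SUP k. IZ \<omega> (ennreal (real k * h)))" .
  moreover have "incseq (\<lambda>k. IZ \<omega> (ennreal (real k * h)))"
    by (intro monoI IZ_mono ennreal_leI mono)
  ultimately show ?thesis by (simp add: LIMSEQ_SUP)
qed

lemma nn_integral_indicator_Ioc_Z:
  assumes A: "A \<in> sets (aug_filt M B (ennreal a))" and a: "0 \<le> a" and h: "0 < h"
  shows "(\<integral>\<^sup>+\<omega>. indicator A \<omega> * (\<integral>\<^sup>+t. indicator {a<..a+h} t * ennreal (Z t \<omega>) \<partial>lborel) \<partial>P)
       = ennreal ((1 - exp (\<gamma> * h)) / (- \<gamma>)) * (\<integral>\<^sup>+\<omega>. indicator A \<omega> * ennreal (Z a \<omega>) \<partial>P)"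
proof -
  have [measurable]: "A \<in> sets P" using A sets_aug_filt_subset by blast
  have "(\<integral>\<^sup>+\<omega>. indicator A \<omega> * (\<integral>\<^sup>+t. indicator {a<..a+h} t * ennreal (Z t \<omega>) \<partial>lborel) \<partial>P)
      = (\<integral>\<^sup>+\<omega>. (\<integral>\<^sup>+t. indicator A \<omega> * (indicator {a<..a+h} t * ennreal (Z t \<omega>)) \<partial>lborel) \<partial>P)"
  proof (intro nn_integral_cong)
    fix \<omega> assume "\<omega> \<in> space P"
    then have [measurable]: "(\<lambda>t. Z t \<omega>) \<in> borel_measurable lborel"
      using borel_measurable_Z_path[of \<omega>] by simp
    show "indicator A \<omega> * (\<integral>\<^sup>+t. indicator {a<..a+h} t * ennreal (Z t \<omega>) \<partial>lborel)
        = (\<integral>\<^sup>+t. indicator A \<omega> * (indicator {a<..a+h} t * ennreal (Z t \<omega>)) \<partial>lborel)"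
      by (rule nn_integral_cmult[symmetric]) measurable
  qed
  also have "\<dots> = (\<integral>\<^sup>+t. (\<integral>\<^sup>+\<omega>. indicator A \<omega> * (indicator {a<..a+h} t * ennreal (Z t \<omega>)) \<partial>P) \<partial>lborel)"
  proof -
    have "(\<lambda>p. indicator A (fst p) * (indicator {a<..a+h} (snd p) * ennreal (Z (snd p) (fst p))))
        \<in> borel_measurable (P \<Otimes>\<^sub>M lborel)"
      by measurable
    then have "(\<lambda>(\<omega>, t). indicator A \<omega> * (indicator {a<..a+h} t * ennreal (Z t \<omega>)))
        \<in> borel_measurable (P \<Otimes>\<^sub>M lborel)"
      by (simp add: case_prod_beta)
    from pair_sigma_finite.Fubini'[OF pair_sigma_finite_P_lborel this] show ?thesis by simp
  qed
  also have "\<dots> = (\<integral>\<^sup>+t. indicator {a<..a+h} t * ennreal (exp (\<gamma> * (t - a)))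
                      * (\<integral>\<^sup>+\<omega>. indicator A \<omega> * ennreal (Z a \<omega>) \<partial>P) \<partial>lborel)"
  proof (intro nn_integral_cong)
    fix t :: real
    show "(\<integral>\<^sup>+\<omega>. indicator A \<omega> * (indicator {a<..a+h} t * ennreal (Z t \<omega>)) \<partial>P)
        = indicator {a<..a+h} t * ennreal (exp (\<gamma> * (t - a))) * (\<integral>\<^sup>+\<omega>. indicator A \<omega> * ennreal (Z a \<omega>) \<partial>P)"
      using nn_integral_Z_on_event[OF a _ A, of t] by (cases "t \<in> {a<..a+h}") simp_all
  qed
  also have "\<dots> = ennreal ((1 - exp (\<gamma> * h)) / (- \<gamma>)) * (\<integral>\<^sup>+\<omega>. indicator A \<omega> * ennreal (Z a \<omega>) \<partial>P)"
    using nn_integral_exp_Ioc[of \<gamma> a "a + h"] \<gamma>_neg h by (subst nn_integral_multc) simp_all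
  finally show ?thesis .
qed

lemma nn_integral_U_increment:
  assumes A: "A \<in> sets (aug_filt M B (ennreal a))" and a: "0 \<le> a" and h: "0 < h"
  shows "(\<integral>\<^sup>+\<omega>. indicator A \<omega> * (ennreal (- \<gamma>) * (\<integral>\<^sup>+t. indicator {a<..a+h} t * ennreal (Z t \<omega>) \<partial>lborel)
              + ennreal (Z (a+h) \<omega>)) \<partial>P)
       = (\<integral>\<^sup>+\<omega>. indicator A \<omega> * ennreal (Z a \<omega>) \<partial>P)"
proof -
  define E where "E = (\<integral>\<^sup>+\<omega>. indicator A \<omega> * ennreal (Z a \<omega>) \<partial>P)"
  define J where "J = (1 - exp (\<gamma> * h)) / (- \<gamma>)"
  have [measurable]: "A \<in> sets P" using A sets_aug_filt_subset by blast
  have J_nonneg: "0 \<le> J" unfolding J_def using \<gamma>_neg h by (simp add: divide_nonneg_neg mult_neg_pos less_imp_le)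
  have "(\<integral>\<^sup>+\<omega>. indicator A \<omega> * (ennreal (- \<gamma>) * (\<integral>\<^sup>+t. indicator {a<..a+h} t * ennreal (Z t \<omega>) \<partial>lborel)
              + ennreal (Z (a+h) \<omega>)) \<partial>P)
     = (\<integral>\<^sup>+\<omega>. ennreal (- \<gamma>) * (indicator A \<omega> * (\<integral>\<^sup>+t. indicator {a<..a+h} t * ennreal (Z t \<omega>) \<partial>lborel))
              + indicator A \<omega> * ennreal (Z (a+h) \<omega>) \<partial>P)"
    by (intro nn_integral_cong) (simp add: distrib_left mult_ac)
  also have "\<dots> = ennreal (- \<gamma>) * (\<integral>\<^sup>+\<omega>. indicator A \<omega> * (\<integral>\<^sup>+t. indicator {a<..a+h} t * ennreal (Z t \<omega>) \<partial>lborel) \<partial>P)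
              + (\<integral>\<^sup>+\<omega>. indicator A \<omega> * ennreal (Z (a+h) \<omega>) \<partial>P)"
    by (subst nn_integral_add) (measurable, subst nn_integral_cmult, measurable)
  also have "\<dots> = ennreal (- \<gamma>) * (ennreal J * E) + ennreal (exp (\<gamma> * h)) * E"
    using nn_integral_indicator_Ioc_Z[OF A a h] nn_integral_Z_on_event[OF a _ A, of "a + h"] h
    by (simp add: E_def J_def)
  also have "\<dots> = (ennreal ((- \<gamma>) * J) + ennreal (exp (\<gamma> * h))) * E"
    using \<gamma>_neg J_nonneg by (simp only: ennreal_mult distrib_right mult.assoc)
  also have "\<dots> = ennreal ((- \<gamma>) * J + exp (\<gamma> * h)) * E"
    using \<gamma>_neg J_nonneg by (subst ennreal_plus) (auto simp: mult_nonpos_nonneg)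
  also have "(- \<gamma>) * J + exp (\<gamma> * h) = 1"
    unfolding J_def using \<gamma>_neg by (simp add: field_simps)
  finally show ?thesis by (simp add: E_def)
qed

text \<open>For stopping times with values in the grid \<open>h \<nat>\<close> optional stopping is an identity, proved one
  grid step at a time; general stopping times are rounded up to the grid and handled by Fatou's lemma
  and the continuity of \<open>Z\<close>.\<close>

lemma U_round_up_step:
  assumes \<omega>: "\<omega> \<in> space M" and h: "0 < h" and a: "a = real m * h"
  shows "U \<omega> (min (round_up h s) (ennreal (a + h))) + (if ennreal a < s then ennreal (Z a \<omega>) else 0)
       = U \<omega> (min (round_up h s) (ennreal a))
         + (if ennreal a < s
            then ennreal (- \<gamma>) * (\<integral>\<^sup>+t. indicator {a<..a+h} t * ennreal (Z t \<omega>) \<partial>lborel)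
                 + ennreal (Z (a + h) \<omega>)
            else 0)"
proof (cases "ennreal a < s")
  case True
  have "0 \<le> a" "0 \<le> h" "0 \<le> a + h" using h by (simp_all add: a)
  have "ennreal (a + h) \<le> round_up h s" using round_up_ge[OF h True[unfolded a]] by (simp add: a)
  moreover have "ennreal a \<le> ennreal (a + h)" using h by (intro ennreal_leI) simp
  ultimately have m1: "min (round_up h s) (ennreal (a + h)) = ennreal (a + h)"
    and m2: "min (round_up h s) (ennreal a) = ennreal a"
    by (auto simp: min_def)
  show ?thesis
    unfolding m1 m2 U_ennreal[OF \<open>0 \<le> a\<close>] U_ennreal[OF \<open>0 \<le> a + h\<close>] IZ_add[OF \<omega> \<open>0 \<le> a\<close> \<open>0 \<le> h\<close>]
    using True by (simp add: distrib_left add_ac)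
next
  case False
  then have "round_up h s \<le> ennreal a" using round_up_le[OF h] by (simp add: a)
  moreover have "ennreal a \<le> ennreal (a + h)" using h by (intro ennreal_leI) simp
  ultimately have "min (round_up h s) (ennreal (a + h)) = round_up h s"
    and "min (round_up h s) (ennreal a) = round_up h s"
    by (auto intro: min_absorb1 order_trans)
  then show ?thesis using False by simp
qed

lemma nn_integral_U_round_up_min_step:
  assumes T: "stopping_time (aug_filt M B) T" and h: "0 < h" and a: "a = real m * h"
  shows "(\<integral>\<^sup>+\<omega>. U \<omega> (min (round_up h (T \<omega>)) (ennreal (a + h))) \<partial>P)
       = (\<integral>\<^sup>+\<omega>. U \<omega> (min (round_up h (T \<omega>)) (ennreal a)) \<partial>P)"
proof -
  have "0 \<le> a" using h by (simp add: a)
  define A where "A = {\<omega> \<in> space M. ennreal a < T \<omega>}"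
  have A: "A \<in> sets (aug_filt M B (ennreal a))"
    using stopping_timeD2[OF T, of "ennreal a"] unfolding pred_def A_def by (simp add: space_aug_filt)
  have [measurable]: "A \<in> sets P" "T \<in> borel_measurable P"
    using A sets_aug_filt_subset borel_measurable_stopping_time[OF T] by auto
  define Q where "Q \<omega> = ennreal (- \<gamma>) * (\<integral>\<^sup>+t. indicator {a<..a+h} t * ennreal (Z t \<omega>) \<partial>lborel)
                        + ennreal (Z (a+h) \<omega>)" for \<omega>
  define E where "E = (\<integral>\<^sup>+\<omega>. indicator A \<omega> * ennreal (Z a \<omega>) \<partial>P)"
  have "(\<integral>\<^sup>+\<omega>. U \<omega> (min (round_up h (T \<omega>)) (ennreal (a+h))) \<partial>P) + E
      = (\<integral>\<^sup>+\<omega>. U \<omega> (min (round_up h (T \<omega>)) (ennreal (a+h))) + indicator A \<omega> * ennreal (Z a \<omega>) \<partial>P)"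
    unfolding E_def by (rule nn_integral_add[symmetric]) measurable
  also have "\<dots> = (\<integral>\<^sup>+\<omega>. U \<omega> (min (round_up h (T \<omega>)) (ennreal a)) + indicator A \<omega> * Q \<omega> \<partial>P)"
  proof (intro nn_integral_cong)
    fix \<omega> assume "\<omega> \<in> space P"
    then have "\<omega> \<in> space M" by simp
    then show "U \<omega> (min (round_up h (T \<omega>)) (ennreal (a+h))) + indicator A \<omega> * ennreal (Z a \<omega>)
        = U \<omega> (min (round_up h (T \<omega>)) (ennreal a)) + indicator A \<omega> * Q \<omega>"
      using U_round_up_step[OF \<open>\<omega> \<in> space M\<close> h a, of "T \<omega>"]
      by (cases "ennreal a < T \<omega>") (simp_all add: A_def Q_def)
  qed
  also have "\<dots> = (\<integral>\<^sup>+\<omega>. U \<omega> (min (round_up h (T \<omega>)) (ennreal a)) \<partial>P) + E"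
    using nn_integral_U_increment[OF A \<open>0 \<le> a\<close> h]
    unfolding Q_def E_def by (subst nn_integral_add) measurable
  finally have "E + (\<integral>\<^sup>+\<omega>. U \<omega> (min (round_up h (T \<omega>)) (ennreal (a+h))) \<partial>P)
      = E + (\<integral>\<^sup>+\<omega>. U \<omega> (min (round_up h (T \<omega>)) (ennreal a)) \<partial>P)"
    by (simp add: add_ac)
  moreover have "E \<le> ennreal (exp (\<gamma> * a))"
    unfolding E_def nn_integral_Z[OF \<open>0 \<le> a\<close>, symmetric]
    by (intro nn_integral_mono) (simp add: indicator_def)
  ultimately show ?thesis
    by (auto simp: ennreal_add_left_cancel top_unique)
qed

lemma nn_integral_U_round_up_min:
  assumes T: "stopping_time (aug_filt M B) T" and h: "0 < h"
  shows "(\<integral>\<^sup>+\<omega>. U \<omega> (min (round_up h (T \<omega>)) (ennreal (real m * h))) \<partial>P) = 1"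
proof (induction m)
  case 0
  have "(\<integral>\<^sup>+\<omega>. U \<omega> (min (round_up h (T \<omega>)) (ennreal (real 0 * h))) \<partial>P) = (\<integral>\<^sup>+\<omega>. 1 \<partial>P)"
    by (intro nn_integral_cong) (simp add: U_zero)
  then show ?case
    using prob_space.emeasure_space_1[OF prob_space_P] by simp
next
  case (Suc m)
  have "real (Suc m) * h = real m * h + h" by (simp add: algebra_simps)
  then show ?case
    using nn_integral_U_round_up_min_step[OF T h refl, of m] Suc.IH by simp
qed

lemma U_round_up_le_liminf:
  assumes \<omega>: "\<omega> \<in> space M" and h: "0 < h"
  shows "U \<omega> (round_up h s) \<le> liminf (\<lambda>k. U \<omega> (min (round_up h s) (ennreal (real k * h))))"
proof (cases "round_up h s")
  case (real y)
  obtain K where K: "y < real K * h" using reals_Archimedean3[OF h] by blast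
  have "eventually (\<lambda>k. U \<omega> (min (round_up h s) (ennreal (real k * h))) = U \<omega> (round_up h s)) sequentially"
    unfolding eventually_sequentially
  proof (intro exI[of _ K] allI impI)
    fix k assume "K \<le> k"
    then have "real K * h \<le> real k * h" using h by (simp add: mult_right_mono)
    then have "ennreal y \<le> ennreal (real k * h)" using K by (intro ennreal_leI) simp
    then show "U \<omega> (min (round_up h s) (ennreal (real k * h))) = U \<omega> (round_up h s)"
      by (simp add: real min_def)
  qed
  then have "(\<lambda>k. U \<omega> (min (round_up h s) (ennreal (real k * h)))) \<longlonglongrightarrow> U \<omega> (round_up h s)"
    by (rule tendsto_eventually)
  then show ?thesis by (simp add: lim_imp_Liminf)
next
  case top
  have "(\<lambda>k. ennreal (- \<gamma>) * IZ \<omega> (ennreal (real k * h))) \<longlonglongrightarrow> ennreal (- \<gamma>) * IZ \<omega> \<infinity>"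
    using \<omega> by (intro ennreal_tendsto_cmult IZ_tendsto_top h) simp_all
  then have "U \<omega> (round_up h s) = liminf (\<lambda>k. ennreal (- \<gamma>) * IZ \<omega> (ennreal (real k * h)))"
    using top by (simp add: U_def lim_imp_Liminf)
  also have "\<dots> \<le> liminf (\<lambda>k. U \<omega> (min (round_up h s) (ennreal (real k * h))))"
    using top h by (intro Liminf_mono always_eventually allI) (simp add: U_ennreal add_increasing2)
  finally show ?thesis .
qed

lemma nn_integral_U_round_up_le:
  assumes T: "stopping_time (aug_filt M B) T" and h: "0 < h"
  shows "(\<integral>\<^sup>+\<omega>. U \<omega> (round_up h (T \<omega>)) \<partial>P) \<le> 1"
proof -
  have [measurable]: "T \<in> borel_measurable P" by (rule borel_measurable_stopping_time[OF T])
  show ?thesis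
  proof (rule nn_integral_le_liminf_bound[where u="\<lambda>k \<omega>. U \<omega> (min (round_up h (T \<omega>)) (ennreal (real k * h)))"])
    show "(\<lambda>\<omega>. U \<omega> (min (round_up h (T \<omega>)) (ennreal (real k * h)))) \<in> borel_measurable P" for k
      by measurable
  qed (use U_round_up_le_liminf h nn_integral_U_round_up_min[OF T h] in simp_all)
qed

lemma U_le_liminf_round_up:
  assumes \<omega>: "\<omega> \<in> space M"
  shows "U \<omega> s \<le> liminf (\<lambda>n. U \<omega> (round_up (1 / real (Suc n)) s))"
proof (cases s)
  case (real x)
  define h where "h n = 1 / real (Suc n)" for n
  have h_pos: "0 < h n" for n by (simp add: h_def)
  define y where "y n = h n * real_of_int \<lceil>x / h n\<rceil>" for n
  have round_up_y: "round_up (h n) s = ennreal (y n)" for n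
    using real by (simp add: round_up_ennreal y_def)
  have x_le_y: "x \<le> y n" for n using le_ceiling_grid[OF h_pos] by (simp add: y_def)
  have y_nonneg: "0 \<le> y n" for n using \<open>0 \<le> x\<close> x_le_y[of n] by linarith
  have "y \<longlonglongrightarrow> x"
  proof (rule real_tendsto_sandwich[where f="\<lambda>n. x" and h="\<lambda>n. x + h n"])
    show "\<forall>\<^sub>F n in sequentially. y n \<le> x + h n"
      using ceiling_grid_less[OF h_pos] by (simp add: y_def less_imp_le)
    have "h \<longlonglongrightarrow> 0" unfolding h_def using LIMSEQ_inverse_real_of_nat by (simp add: inverse_eq_divide)
    then show "(\<lambda>n. x + h n) \<longlonglongrightarrow> x" using tendsto_add[OF tendsto_const[of x]] by fastforce
  qed (use x_le_y in simp_all)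
  then have "(\<lambda>n. Z (y n) \<omega>) \<longlonglongrightarrow> Z x \<omega>"
    using \<open>0 \<le> x\<close> y_nonneg \<omega>
    by (intro continuous_on_tendsto_compose[OF continuous_on_Z]) auto
  then have "(\<lambda>n. ennreal (- \<gamma>) * IZ \<omega> s + ennreal (Z (y n) \<omega>))
               \<longlonglongrightarrow> ennreal (- \<gamma>) * IZ \<omega> s + ennreal (Z x \<omega>)"
    by (intro tendsto_add tendsto_const tendsto_ennrealI)
  then have "U \<omega> s = liminf (\<lambda>n. ennreal (- \<gamma>) * IZ \<omega> s + ennreal (Z (y n) \<omega>))"
    using real by (simp add: U_ennreal lim_imp_Liminf)
  also have "\<dots> \<le> liminf (\<lambda>n. U \<omega> (round_up (h n) s))"
  proof (intro Liminf_mono always_eventually allI)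
    fix n
    have "IZ \<omega> s \<le> IZ \<omega> (ennreal (y n))"
      using x_le_y real by (intro IZ_mono) (simp add: ennreal_leI)
    then show "ennreal (- \<gamma>) * IZ \<omega> s + ennreal (Z (y n) \<omega>) \<le> U \<omega> (round_up (h n) s)"
      using \<open>0 \<le> x\<close> x_le_y[of n]
      by (simp add: round_up_y U_ennreal add_right_mono mult_left_mono)
  qed
  finally show ?thesis by (simp add: h_def)
qed (simp add: Liminf_const)

lemma nn_integral_U_stopping_time_le:
  assumes T: "stopping_time (aug_filt M B) T"
  shows "(\<integral>\<^sup>+\<omega>. U \<omega> (T \<omega>) \<partial>P) \<le> 1"
proof -
  have [measurable]: "T \<in> borel_measurable P" by (rule borel_measurable_stopping_time[OF T])
  show ?thesis
  proof (rule nn_integral_le_liminf_bound[where u="\<lambda>n \<omega>. U \<omega> (round_up (1 / real (Suc n)) (T \<omega>))"])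
    show "(\<lambda>\<omega>. U \<omega> (round_up (1 / real (Suc n)) (T \<omega>))) \<in> borel_measurable P" for n
      by measurable
  qed (use U_le_liminf_round_up nn_integral_U_round_up_le[OF T] in simp_all)
qed

section \<open>Bounds on the reward\<close>

lemma nn_integral_IZ_top: "(\<integral>\<^sup>+\<omega>. IZ \<omega> \<infinity> \<partial>P) = ennreal (1 / (- \<gamma>))"
proof -
  have "(\<integral>\<^sup>+\<omega>. IZ \<omega> \<infinity> \<partial>P) = (\<integral>\<^sup>+\<omega>. (\<integral>\<^sup>+t. indicator {0..} t * ennreal (Z t \<omega>) \<partial>lborel) \<partial>P)"
    by (simp only: IZ_def time_upto_top)
  also have "\<dots> = (\<integral>\<^sup>+t. (\<integral>\<^sup>+\<omega>. indicator {0..} t * ennreal (Z t \<omega>) \<partial>P) \<partial>lborel)"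
  proof -
    have "(\<lambda>p. indicator {0..} (snd p) * ennreal (Z (snd p) (fst p))) \<in> borel_measurable (P \<Otimes>\<^sub>M lborel)"
      by measurable
    then have "(\<lambda>(\<omega>, t). indicator {0..} t * ennreal (Z t \<omega>)) \<in> borel_measurable (P \<Otimes>\<^sub>M lborel)"
      by (simp add: case_prod_beta)
    from pair_sigma_finite.Fubini'[OF pair_sigma_finite_P_lborel this] show ?thesis by simp
  qed
  also have "\<dots> = (\<integral>\<^sup>+t. indicator {0..} t * ennreal (exp (\<gamma> * t)) \<partial>lborel)"
    using nn_integral_Z by (intro nn_integral_cong) (auto simp: indicator_def)
  also have "\<dots> = ennreal (1 / (- \<gamma>))"
    by (rule nn_integral_exp_atLeast_0[OF \<gamma>_neg])
  finally show ?thesis .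
qed

lemma discounted_GBM_eq_Z:
  assumes "\<gamma> = \<theta> - \<alpha> - \<rho> - \<mu>" and "0 \<le> t"
  shows "exp (- (\<rho> + \<mu>) * t) * GBM x \<theta> \<alpha> \<sigma> B t \<omega> = x * Z t \<omega>"
proof -
  have "- (\<rho> + \<mu>) * t + ((\<theta> - \<alpha> - \<sigma>\<^sup>2 / 2) * t + \<sigma> * B t \<omega>) = \<gamma> * t + \<sigma> * B (max 0 t) \<omega> - \<sigma>^2 / 2 * t"
    using assms(2) by (simp add: assms(1) algebra_simps)
  then show ?thesis unfolding GBM_def Z_def by (simp add: exp_add[symmetric] mult.left_commute)
qed

lemma running_reward_eq_IZ:
  assumes \<gamma>: "\<gamma> = \<theta> - \<alpha> - \<rho> - \<mu>" and "0 \<le> a" and "0 \<le> x" and \<omega>: "\<omega> \<in> space M"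
  shows "(LINT t:{t. 0 \<le> t \<and> ennreal t \<le> s}|lborel. exp (- (\<rho> + \<mu>) * t) * a * GBM x \<theta> \<alpha> \<sigma> B t \<omega>)
       = enn2real (ennreal (a * x) * IZ \<omega> s)"
proof -
  have [measurable]: "(\<lambda>t. Z t \<omega>) \<in> borel_measurable borel"
    using borel_measurable_Z_path[OF \<omega>] by simp
  have [measurable]: "time_upto s \<in> sets borel"
    unfolding time_upto_def by measurable
  have "(LINT t:{t. 0 \<le> t \<and> ennreal t \<le> s}|lborel. exp (- (\<rho> + \<mu>) * t) * a * GBM x \<theta> \<alpha> \<sigma> B t \<omega>)
      = (\<integral>t. a * x * (indicator (time_upto s) t * Z t \<omega>) \<partial>lborel)"
    unfolding set_lebesgue_integral_def time_upto_def[symmetric]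
    using discounted_GBM_eq_Z[OF \<gamma>]
    by (intro Bochner_Integration.integral_cong) (auto simp: indicator_def time_upto_def mult_ac)
  also have "\<dots> = enn2real (\<integral>\<^sup>+t. ennreal (a * x * (indicator (time_upto s) t * Z t \<omega>)) \<partial>lborel)"
    using assms(2,3) Z_pos by (intro integral_eq_nn_integral) (auto simp: less_imp_le)
  also have "(\<integral>\<^sup>+t. ennreal (a * x * (indicator (time_upto s) t * Z t \<omega>)) \<partial>lborel)
      = ennreal (a * x) * IZ \<omega> s"
    unfolding IZ_def using assms(2,3) Z_pos
    by (subst nn_integral_cmult[symmetric], measurable)
      (auto intro!: nn_integral_cong simp: ennreal_mult indicator_def less_imp_le)
  finally show ?thesis .
qed

lemma stopping_reward_le:
  assumes "\<gamma> = \<theta> - \<alpha> - \<rho> - \<mu>" and "0 \<le> u" and "0 \<le> fh" and "0 \<le> \<rho> + \<mu>"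
  shows "exp (- (\<rho> + \<mu>) * u) * fh * (GBM x \<theta> \<alpha> \<sigma> B u \<omega> - K) \<le> fh * x * Z u \<omega> + fh * \<bar>K\<bar>"
proof -
  have "0 \<le> (\<rho> + \<mu>) * u" using assms by simp
  then have "- (\<rho> + \<mu>) * u \<le> 0" by linarith
  then have "exp (- (\<rho> + \<mu>) * u) \<le> 1" by (simp del: mult_minus_left)
  then have "\<bar>K * exp (- (\<rho> + \<mu>) * u)\<bar> \<le> \<bar>K\<bar>"
    by (simp add: abs_mult mult_left_le)
  then have "- (K * exp (- (\<rho> + \<mu>) * u)) \<le> \<bar>K\<bar>"
    by linarith
  then have "fh * (- (K * exp (- (\<rho> + \<mu>) * u))) \<le> fh * \<bar>K\<bar>"
    using assms by (intro mult_left_mono) auto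
  moreover have "exp (- (\<rho> + \<mu>) * u) * fh * (GBM x \<theta> \<alpha> \<sigma> B u \<omega> - K)
      = fh * (exp (- (\<rho> + \<mu>) * u) * GBM x \<theta> \<alpha> \<sigma> B u \<omega>) + fh * (- (K * exp (- (\<rho> + \<mu>) * u)))"
    by (simp add: algebra_simps)
  ultimately show ?thesis
    using discounted_GBM_eq_Z[OF assms(1,2)] by simp
qed

lemma running_reward_le:
  assumes \<gamma>: "\<gamma> = \<theta> - \<alpha> - \<rho> - \<mu>" and a: "0 \<le> a" and x: "0 \<le> x" and ac: "a \<le> c * (- \<gamma>)"
    and \<omega>: "\<omega> \<in> space M"
  shows "ennreal (LINT t:{t. 0 \<le> t \<and> ennreal t \<le> s}|lborel. exp (- (\<rho> + \<mu>) * t) * a * GBM x \<theta> \<alpha> \<sigma> B t \<omega>)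
       \<le> ennreal (c * x) * (ennreal (- \<gamma>) * IZ \<omega> s)"
proof -
  have "0 \<le> c * (- \<gamma>)" using a ac by linarith
  then have "0 \<le> c" using \<gamma>_neg by (auto simp: zero_le_mult_iff mult_le_0_iff)
  have "a * x \<le> (c * (- \<gamma>)) * x"
    using ac x by (rule mult_right_mono)
  then have "ennreal (a * x) \<le> ennreal (c * x) * ennreal (- \<gamma>)"
    using \<open>0 \<le> c\<close> x \<gamma>_neg by (simp add: ennreal_mult[symmetric] ennreal_leI mult_ac)
  then have "ennreal (a * x) * IZ \<omega> s \<le> ennreal (c * x) * (ennreal (- \<gamma>) * IZ \<omega> s)"
    unfolding mult.assoc[symmetric] by (rule mult_right_mono) simp
  moreover have "ennreal (LINT t:{t. 0 \<le> t \<and> ennreal t \<le> s}|lborel. exp (- (\<rho> + \<mu>) * t) * a * GBM x \<theta> \<alpha> \<sigma> B t \<omega>)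
      \<le> ennreal (a * x) * IZ \<omega> s"
    unfolding running_reward_eq_IZ[OF \<gamma> a x \<omega>] by (simp add: ennreal_enn2real_if)
  ultimately show ?thesis by (rule order_trans[rotated])
qed

text \<open>With \<open>c = max f\<^sub>h (a / -\<gamma>)\<close>, the bound \<open>a \<le> c (-\<gamma>)\<close> controls the running reward by
  the integral part of \<open>c x U\<close>, and \<open>f\<^sub>h \<le> c\<close> controls the stopping reward by \<open>c x Z\<close>.\<close>

lemma reward_integrand_le:
  assumes \<gamma>: "\<gamma> = \<theta> - \<alpha> - \<rho> - \<mu>" and x: "0 \<le> x" and a: "0 \<le> \<alpha> + \<nu> * \<mu>" and fh: "0 \<le> fh"
    and "0 \<le> \<rho> + \<mu>" and \<omega>: "\<omega> \<in> space M"
  shows "ennreal ((LINT t:{t. 0 \<le> t \<and> ennreal t \<le> s}|lborel.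
                     exp (- (\<rho> + \<mu>) * t) * (\<alpha> + \<nu> * \<mu>) * GBM x \<theta> \<alpha> \<sigma> B t \<omega>)
           + (if s = \<infinity> then 0 else exp (- (\<rho> + \<mu>) * enn2real s) * fh * (GBM x \<theta> \<alpha> \<sigma> B (enn2real s) \<omega> - K)))
       \<le> ennreal (max fh ((\<alpha> + \<nu> * \<mu>) / (- \<gamma>)) * x) * U \<omega> s + ennreal (fh * \<bar>K\<bar>)"
proof -
  define c where "c = max fh ((\<alpha> + \<nu> * \<mu>) / (- \<gamma>))"
  define L where "L = (LINT t:{t. 0 \<le> t \<and> ennreal t \<le> s}|lborel.
                         exp (- (\<rho> + \<mu>) * t) * (\<alpha> + \<nu> * \<mu>) * GBM x \<theta> \<alpha> \<sigma> B t \<omega>)"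
  define Y where "Y = (if s = \<infinity> then 0 else fh * x * Z (enn2real s) \<omega>)"
  have "0 \<le> c" using fh by (simp add: c_def)
  have "(\<alpha> + \<nu> * \<mu>) / (- \<gamma>) \<le> c" by (simp add: c_def)
  then have "\<alpha> + \<nu> * \<mu> \<le> c * (- \<gamma>)"
    using \<gamma>_neg pos_divide_le_eq[of "- \<gamma>" "\<alpha> + \<nu> * \<mu>" c] by simp
  from running_reward_le[OF \<gamma> a x this \<omega>]
  have "ennreal L \<le> ennreal (c * x) * (ennreal (- \<gamma>) * IZ \<omega> s)"
    by (simp add: L_def)
  moreover have "ennreal Y \<le> ennreal (c * x) * (if s = \<infinity> then 0 else ennreal (Z (enn2real s) \<omega>))"
  proof (cases "s = \<infinity>")
    case False
    have "fh * x * Z (enn2real s) \<omega> \<le> c * x * Z (enn2real s) \<omega>"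
      using x Z_pos by (intro mult_right_mono) (auto simp: c_def less_imp_le)
    then show ?thesis
      using False \<open>0 \<le> c\<close> x Z_pos by (simp add: Y_def ennreal_mult[symmetric] less_imp_le ennreal_leI)
  qed (simp add: Y_def)
  ultimately have LY: "ennreal L + ennreal Y \<le> ennreal (c * x) * U \<omega> s"
    unfolding U_def distrib_left by (intro add_mono) auto
  have "(if s = \<infinity> then 0 else exp (- (\<rho> + \<mu>) * enn2real s) * fh * (GBM x \<theta> \<alpha> \<sigma> B (enn2real s) \<omega> - K))
      \<le> Y + fh * \<bar>K\<bar>"
    using stopping_reward_le[OF \<gamma> _ fh \<open>0 \<le> \<rho> + \<mu>\<close>, of "enn2real s" x \<omega> K] fh by (simp add: Y_def)
  then have "ennreal (L + (if s = \<infinity> then 0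
                 else exp (- (\<rho> + \<mu>) * enn2real s) * fh * (GBM x \<theta> \<alpha> \<sigma> B (enn2real s) \<omega> - K)))
      \<le> ennreal (L + Y + fh * \<bar>K\<bar>)"
    by (intro ennreal_leI) simp
  also have "\<dots> = ennreal L + ennreal Y + ennreal (fh * \<bar>K\<bar>)"
  proof -
    have "0 \<le> L" using running_reward_eq_IZ[OF \<gamma> a x \<omega>] by (simp add: L_def)
    moreover have "0 \<le> Y" using fh x Z_pos by (simp add: Y_def less_imp_le)
    ultimately show ?thesis using fh by (simp add: ennreal_plus)
  qed
  also have "\<dots> \<le> ennreal (c * x) * U \<omega> s + ennreal (fh * \<bar>K\<bar>)"
    using LY by (rule add_right_mono)
  finally show ?thesis
    unfolding c_def[symmetric] L_def[symmetric] .
qed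

lemma reward_le:
  assumes \<gamma>: "\<gamma> = \<theta> - \<alpha> - \<rho> - \<mu>" and x: "0 \<le> x" and a: "0 \<le> \<alpha> + \<nu> * \<mu>" and fh: "0 \<le> fh"
    and r: "0 \<le> \<rho> + \<mu>" and T: "stopping_time (aug_filt M B) T"
  shows "reward M B x \<theta> \<alpha> \<sigma> \<rho> \<nu> K fh \<mu> T \<le> max fh ((\<alpha> + \<nu> * \<mu>) / (- \<gamma>)) * x + fh * \<bar>K\<bar>"
proof -
  define c where "c = max fh ((\<alpha> + \<nu> * \<mu>) / (- \<gamma>))"
  have "0 \<le> c" using fh by (simp add: c_def)
  have [measurable]: "T \<in> borel_measurable P" by (rule borel_measurable_stopping_time[OF T])
  have "(\<integral>\<^sup>+\<omega>. ennreal ((LINT t:{t. 0 \<le> t \<and> ennreal t \<le> T \<omega>}|lborel.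
                     exp (- (\<rho> + \<mu>) * t) * (\<alpha> + \<nu> * \<mu>) * GBM x \<theta> \<alpha> \<sigma> B t \<omega>)
           + (if T \<omega> = \<infinity> then 0
              else exp (- (\<rho> + \<mu>) * enn2real (T \<omega>)) * fh * (GBM x \<theta> \<alpha> \<sigma> B (enn2real (T \<omega>)) \<omega> - K))) \<partial>P)
      \<le> (\<integral>\<^sup>+\<omega>. ennreal (c * x) * U \<omega> (T \<omega>) + ennreal (fh * \<bar>K\<bar>) \<partial>P)"
    using reward_integrand_le[OF \<gamma> x a fh r] by (intro nn_integral_mono) (simp add: c_def)
  also have "\<dots> = ennreal (c * x) * (\<integral>\<^sup>+\<omega>. U \<omega> (T \<omega>) \<partial>P) + ennreal (fh * \<bar>K\<bar>) * emeasure P (space P)"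
    by (simp add: nn_integral_add nn_integral_cmult)
  also have "\<dots> \<le> ennreal (c * x) * 1 + ennreal (fh * \<bar>K\<bar>) * 1"
    using nn_integral_U_stopping_time_le[OF T] prob_space.emeasure_space_1[OF prob_space_P]
    by (intro add_mono mult_left_mono) auto
  also have "\<dots> = ennreal (c * x + fh * \<bar>K\<bar>)"
    using \<open>0 \<le> c\<close> x fh by (simp add: ennreal_plus)
  finally show ?thesis
    unfolding reward_def c_def[symmetric]
    using \<open>0 \<le> c\<close> x fh by (intro integral_real_bounded) auto
qed

lemma reward_never_stop:
  assumes \<gamma>: "\<gamma> = \<theta> - \<alpha> - \<rho> - \<mu>" and x: "0 \<le> x" and a: "0 \<le> \<alpha> + \<nu> * \<mu>"
  shows "reward M B x \<theta> \<alpha> \<sigma> \<rho> \<nu> K fh \<mu> (\<lambda>_. \<infinity>) = (\<alpha> + \<nu> * \<mu>) / (- \<gamma>) * x"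
proof -
  define a where "a = \<alpha> + \<nu> * \<mu>"
  have "0 \<le> a * x" using a x by (simp add: a_def)
  have [measurable]: "(\<lambda>\<omega>. IZ \<omega> \<infinity>) \<in> borel_measurable P"
    using borel_measurable_IZ[of "\<lambda>_. \<infinity>"] by simp
  have "(LINT t:{t. 0 \<le> t \<and> ennreal t \<le> \<infinity>}|lborel. exp (- (\<rho> + \<mu>) * t) * (\<alpha> + \<nu> * \<mu>) * GBM x \<theta> \<alpha> \<sigma> B t \<omega>)
      + (if (\<infinity>::ennreal) = \<infinity> then 0
         else exp (- (\<rho> + \<mu>) * enn2real (\<infinity>::ennreal)) * fh * (GBM x \<theta> \<alpha> \<sigma> B (enn2real (\<infinity>::ennreal)) \<omega> - K))
      = enn2real (ennreal (a * x) * IZ \<omega> \<infinity>)" if "\<omega> \<in> space P" for \<omega>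
    using running_reward_eq_IZ[OF \<gamma> a x, of \<omega> \<infinity>] that by (simp add: a_def)
  then have "reward M B x \<theta> \<alpha> \<sigma> \<rho> \<nu> K fh \<mu> (\<lambda>_. \<infinity>) = (\<integral>\<omega>. enn2real (ennreal (a * x) * IZ \<omega> \<infinity>) \<partial>P)"
    unfolding reward_def by (intro Bochner_Integration.integral_cong) simp_all
  also have "\<dots> = enn2real (\<integral>\<^sup>+\<omega>. ennreal (enn2real (ennreal (a * x) * IZ \<omega> \<infinity>)) \<partial>P)"
    by (rule integral_eq_nn_integral) simp_all
  also have "(\<integral>\<^sup>+\<omega>. ennreal (enn2real (ennreal (a * x) * IZ \<omega> \<infinity>)) \<partial>P) = (\<integral>\<^sup>+\<omega>. ennreal (a * x) * IZ \<omega> \<infinity> \<partial>P)"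
  proof (rule nn_integral_cong_AE)
    have "AE \<omega> in P. IZ \<omega> \<infinity> \<noteq> \<infinity>"
      using nn_integral_IZ_top by (intro nn_integral_PInf_AE) simp_all
    then show "AE \<omega> in P. ennreal (enn2real (ennreal (a * x) * IZ \<omega> \<infinity>)) = ennreal (a * x) * IZ \<omega> \<infinity>"
      by eventually_elim (simp add: ennreal_enn2real_if ennreal_mult_eq_top_iff)
  qed
  also have "\<dots> = ennreal (a * x) * ennreal (1 / (- \<gamma>))"
    by (subst nn_integral_cmult) (use nn_integral_IZ_top in simp_all)
  also have "\<dots> = ennreal (a * x * (1 / (- \<gamma>)))"
    using \<gamma>_neg \<open>0 \<le> a * x\<close> by (intro ennreal_mult[symmetric]) auto
  finally show ?thesis
    using \<gamma>_neg \<open>0 \<le> a * x\<close> by (simp add: a_def divide_nonneg_neg)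
qed

lemma reward_stop_now: "reward M B x \<theta> \<alpha> \<sigma> \<rho> \<nu> K fh \<mu> (\<lambda>_. 0) = fh * (x - K)"
proof -
  have "(LINT t:{t. 0 \<le> t \<and> ennreal t \<le> 0}|lborel. exp (- (\<rho> + \<mu>) * t) * (\<alpha> + \<nu> * \<mu>) * GBM x \<theta> \<alpha> \<sigma> B t \<omega>)
      = 0" for \<omega>
    unfolding set_lebesgue_integral_def using AE_lborel_singleton[of 0]
    by (intro integral_eq_zero_AE) (auto elim!: eventually_mono simp: indicator_def)
  moreover have "GBM x \<theta> \<alpha> \<sigma> B 0 \<omega> = x" if "\<omega> \<in> space M" for \<omega>
    using B_zero[OF that] by (simp add: GBM_def)
  ultimately have "reward M B x \<theta> \<alpha> \<sigma> \<rho> \<nu> K fh \<mu> (\<lambda>_. 0) = (\<integral>\<omega>. fh * (x - K) \<partial>P)"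
    unfolding reward_def by (intro Bochner_Integration.integral_cong) simp_all
  then show ?thesis using prob_space.prob_space[OF prob_space_P] by simp
qed

lemma VN_le:
  assumes "\<gamma> = \<theta> - \<alpha> - \<rho> - \<mu>" and "0 \<le> x" and "0 \<le> \<alpha> + \<nu> * \<mu>" and "0 \<le> fh" and "0 \<le> \<rho> + \<mu>"
  shows "VN M B x \<theta> \<alpha> \<sigma> \<rho> \<nu> K fh \<mu> \<le> max fh ((\<alpha> + \<nu> * \<mu>) / (- \<gamma>)) * x + fh * \<bar>K\<bar>"
proof -
  have "(\<lambda>_. 0) \<in> {\<tau>. stopping_time (aug_filt M B) \<tau>}" by (simp add: stopping_time_const)
  then show ?thesis
    unfolding VN_def using reward_le[OF assms] by (intro cSUP_least) auto
qed

lemma reward_le_VN: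
  assumes "\<gamma> = \<theta> - \<alpha> - \<rho> - \<mu>" and "0 \<le> x" and "0 \<le> \<alpha> + \<nu> * \<mu>" and "0 \<le> fh" and "0 \<le> \<rho> + \<mu>"
    and "stopping_time (aug_filt M B) T"
  shows "reward M B x \<theta> \<alpha> \<sigma> \<rho> \<nu> K fh \<mu> T \<le> VN M B x \<theta> \<alpha> \<sigma> \<rho> \<nu> K fh \<mu>"
  unfolding VN_def using assms(6) reward_le[OF assms(1-5)]
  by (intro cSUP_upper bdd_aboveI2) auto

end

section \<open>The asymptotic slope of the value function\<close>

lemma tendsto_div_at_top_max:
  fixes V :: "real \<Rightarrow> real" and f b K C :: real
  assumes lower_b: "\<forall>\<^sub>F x in at_top. b * x \<le> V x"
    and lower_f: "\<forall>\<^sub>F x in at_top. f * (x - K) \<le> V x"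
    and upper: "\<forall>\<^sub>F x in at_top. V x \<le> max f b * x + C"
  shows "((\<lambda>x. V x / x) \<longlongrightarrow> max f b) at_top"
proof (rule real_tendsto_sandwich[where f="\<lambda>x. max b (f - f * K / x)" and h="\<lambda>x. max f b + C / x"])
  show "\<forall>\<^sub>F x in at_top. max b (f - f * K / x) \<le> V x / x"
    using lower_b lower_f eventually_gt_at_top[of 0]
  proof eventually_elim
    case (elim x)
    have "b \<le> V x / x" using elim by (simp add: pos_le_divide_eq)
    moreover have "f - f * K / x = f * (x - K) / x" using elim by (simp add: field_simps)
    moreover have "f * (x - K) / x \<le> V x / x" using elim by (intro divide_right_mono) auto
    ultimately show ?case by simp
  qed
  show "\<forall>\<^sub>F x in at_top. V x / x \<le> max f b + C / x"
    using upper eventually_gt_at_top[of 0]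
    by eventually_elim (simp add: pos_divide_le_eq field_simps)
  have inverse_0: "((\<lambda>x. c / x) \<longlongrightarrow> 0) at_top" for c :: real
    by (rule tendsto_divide_0[OF tendsto_const filterlim_at_top_imp_at_infinity[OF filterlim_ident]])
  have "((\<lambda>x. max b (f - f * K / x)) \<longlongrightarrow> max b (f - 0)) at_top"
    by (intro tendsto_max tendsto_const tendsto_diff inverse_0)
  then show "((\<lambda>x. max b (f - f * K / x)) \<longlongrightarrow> max f b) at_top"
    by (simp add: max.commute)
  have "((\<lambda>x. max f b + C / x) \<longlongrightarrow> max f b + 0) at_top"
    by (intro tendsto_add tendsto_const inverse_0)
  then show "((\<lambda>x. max f b + C / x) \<longlongrightarrow> max f b) at_top" by simp
qed

theorem proposition4p4:
  fixes M :: "'a measure" and B :: "real \<Rightarrow> 'a \<Rightarrow> real"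
    and \<theta> \<alpha> \<sigma> \<rho> \<nu> K \<rho>h \<mu>m \<mu>M \<mu>h \<mu> :: real
  assumes BM: "std_BM M B"
    and "\<theta> > 0" and "\<alpha> \<ge> 0" and "\<sigma> > 0" and "\<rho> > 0" and "0 \<le> \<nu>" and "\<nu> \<le> 1"
    and "\<rho>h > 0" and "0 < \<mu>m" and "\<mu>m \<le> \<mu>M"
    and "\<mu>m \<le> \<mu>h" and "\<mu>h \<le> \<mu>M"
    and "\<theta> - \<alpha> - \<rho> - \<mu>m < 0"
    and "\<mu>m \<le> \<mu>" and "\<mu> \<le> \<mu>M"
  shows "((\<lambda>x. VN M B x \<theta> \<alpha> \<sigma> \<rho> \<nu> K ((\<rho>h + \<mu>h) / (\<rho> + \<mu>)) \<mu> / x)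
           \<longlongrightarrow> max ((\<rho>h + \<mu>h) / (\<rho> + \<mu>)) ((\<alpha> + \<nu> * \<mu>) / (\<rho> + \<mu> + \<alpha> - \<theta>))) at_top"
proof -
  define \<gamma> where "\<gamma> = \<theta> - \<alpha> - \<rho> - \<mu>"
  define fh where "fh = (\<rho>h + \<mu>h) / (\<rho> + \<mu>)"
  have "\<gamma> < 0" and "0 < \<mu>" using assms(13,14) assms(9) by (simp_all add: \<gamma>_def)
  have "prob_space M" using BM by (simp add: std_BM_def)
  then interpret discounted_price M B \<gamma> \<sigma>
    using BM \<open>\<gamma> < 0\<close> by (simp add: discounted_price_def discounted_price_axioms_def brownian_motion_def
      brownian_motion_axioms_def)
  have fh: "0 \<le> fh" and a: "0 \<le> \<alpha> + \<nu> * \<mu>" and r: "0 \<le> \<rho> + \<mu>"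
    using assms(3,5,6,8,9,11) \<open>0 < \<mu>\<close> by (simp_all add: fh_def)
  have \<beta>: "(\<alpha> + \<nu> * \<mu>) / (- \<gamma>) = (\<alpha> + \<nu> * \<mu>) / (\<rho> + \<mu> + \<alpha> - \<theta>)"
    by (simp add: \<gamma>_def)
  show ?thesis
    unfolding fh_def[symmetric] \<beta>[symmetric]
  proof (rule tendsto_div_at_top_max)
    show "\<forall>\<^sub>F x in at_top. (\<alpha> + \<nu> * \<mu>) / (- \<gamma>) * x \<le> VN M B x \<theta> \<alpha> \<sigma> \<rho> \<nu> K fh \<mu>"
      using eventually_ge_at_top[of 0]
      by eventually_elim (metis reward_never_stop reward_le_VN \<gamma>_def a fh r stopping_time_const)
    show "\<forall>\<^sub>F x in at_top. fh * (x - K) \<le> VN M B x \<theta> \<alpha> \<sigma> \<rho> \<nu> K fh \<mu>"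
      using eventually_ge_at_top[of 0]
      by eventually_elim (metis reward_stop_now reward_le_VN \<gamma>_def a fh r stopping_time_const)
    show "\<forall>\<^sub>F x in at_top. VN M B x \<theta> \<alpha> \<sigma> \<rho> \<nu> K fh \<mu> \<le> max fh ((\<alpha> + \<nu> * \<mu>) / (- \<gamma>)) * x + fh * \<bar>K\<bar>"
      using eventually_ge_at_top[of 0] by eventually_elim (rule VN_le[OF \<gamma>_def _ a fh r])
  qed
qed

end
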